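(* If $f\colon X\to Y$ is an asymptotically Lipschitz function of metric spaces, then $\operatorname{asdim}_{AN}(X)\le \operatorname{asdim}_{AN}(f)+\operatorname{asdim}_{AN}(Y)$.
   Context: $f$ is asymptotically Lipschitz if there are constants $a,b\ge0$ with $d_Y(f(x),f(y))\le a\,d_X(x,y)+b$ for all $x,y$. For a metric space $X$, an $n$-dimensional control function is $D_X\colon\mathbb R_+\to\mathbb R_+$ such that for each $r>0$ there are families $\mathcal U_1,\dots,\mathcal U_{n+1}$ of subsets of $X$, each $r$-disjoint (points in different members at distance $\ge r$), with members of diameter $\le D_X(r)$, whose union covers $X$. $\operatorname{asdim}_{AN}(X)\le n$ iff $X$ has an $n$-dimensional control function of the form $D_X(r)=cr+b$ with $b,c\ge0$. For $r>0$, the $r$-components of $A\subset X$ are the classes of points of $A$ joined by finite sequences in $A$ with consecutive distances $\le r$. An $m$-dimensional control function of $f$ is $D_f\colon\mathbb R_+\times\mathbb R_+\to\mathbb R_+$ such that for all $r_X,R_Y>0$ every $A\subset X$ with $\operatorname{diam} f(A)\le R_Y$ is a union of $m+1$ sets whose $r_X$-components have diameter $\le D_f(r_X,R_Y)$. $\operatorname{asdim}_{AN}(f)$ is the minimal $m$ for which $f$ has an $m$-dimensional control function of the form $D_f(r_X,R_Y)=a r_X+bR_Y+c$ (constants $a,b,c$). *)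

theory Defs
  imports "HOL-Analysis.Analysis" "HOL-Library.Extended_Nat"
begin

definition asymp_lipschitz :: "'a metric \<Rightarrow> 'b metric \<Rightarrow> ('a \<Rightarrow> 'b) \<Rightarrow> bool" where
  "asymp_lipschitz X Y f \<longleftrightarrow> f ` mspace X \<subseteq> mspace Y \<and>
     (\<exists>a b::real. a \<ge> 0 \<and> b \<ge> 0 \<and>
        (\<forall>x\<in>mspace X. \<forall>y\<in>mspace X. mdist Y (f x) (f y) \<le> a * mdist X x y + b))"

definition diam_le :: "'a metric \<Rightarrow> 'a set \<Rightarrow> real \<Rightarrow> bool" where
  "diam_le X A D \<longleftrightarrow> (\<forall>x\<in>A. \<forall>y\<in>A. mdist X x y \<le> D)"

definition r_disjoint :: "'a metric \<Rightarrow> real \<Rightarrow> 'a set set \<Rightarrow> bool" where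
  "r_disjoint X r U \<longleftrightarrow>
     (\<forall>A\<in>U. \<forall>B\<in>U. A \<noteq> B \<longrightarrow> (\<forall>x\<in>A. \<forall>y\<in>B. mdist X x y \<ge> r))"

(* n-dimensional control function of X: families U 0, ..., U n (n+1 families) *)
definition control_fun :: "'a metric \<Rightarrow> nat \<Rightarrow> (real \<Rightarrow> real) \<Rightarrow> bool" where
  "control_fun X n D \<longleftrightarrow> (\<forall>r>0. \<exists>U::nat \<Rightarrow> 'a set set.
      (\<forall>i\<le>n. r_disjoint X r (U i) \<and> (\<forall>A\<in>U i. A \<subseteq> mspace X \<and> diam_le X A (D r))) \<and>
      mspace X \<subseteq> (\<Union>i\<le>n. \<Union>(U i)))"

definition asdimAN_le :: "'a metric \<Rightarrow> nat \<Rightarrow> bool" where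
  "asdimAN_le X n \<longleftrightarrow> (\<exists>b c::real. b \<ge> 0 \<and> c \<ge> 0 \<and> control_fun X n (\<lambda>r. c * r + b))"

definition asdimAN :: "'a metric \<Rightarrow> enat" where
  "asdimAN X = Inf {enat n | n. asdimAN_le X n}"

(* x and y lie in the same r-component of A *)
definition r_chain :: "'a metric \<Rightarrow> real \<Rightarrow> 'a set \<Rightarrow> 'a \<Rightarrow> 'a \<Rightarrow> bool" where
  "r_chain X r A x y \<longleftrightarrow> x \<in> A \<and> (\<lambda>u v. u \<in> A \<and> v \<in> A \<and> mdist X u v \<le> r)\<^sup>*\<^sup>* x y"

definition components_diam_le :: "'a metric \<Rightarrow> real \<Rightarrow> 'a set \<Rightarrow> real \<Rightarrow> bool" where
  "components_diam_le X r A D \<longleftrightarrow> (\<forall>x\<in>A. \<forall>y\<in>A. r_chain X r A x y \<longrightarrow> mdist X x y \<le> D)"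

definition fun_control_fun ::
  "'a metric \<Rightarrow> 'b metric \<Rightarrow> ('a \<Rightarrow> 'b) \<Rightarrow> nat \<Rightarrow> (real \<Rightarrow> real \<Rightarrow> real) \<Rightarrow> bool" where
  "fun_control_fun X Y f m D \<longleftrightarrow> (\<forall>rX>0. \<forall>RY>0. \<forall>A. A \<subseteq> mspace X \<longrightarrow>
      diam_le Y (f ` A) RY \<longrightarrow>
      (\<exists>B::nat \<Rightarrow> 'a set. A = (\<Union>i\<le>m. B i) \<and>
          (\<forall>i\<le>m. components_diam_le X rX (B i) (D rX RY))))"

definition fun_asdimAN_le :: "'a metric \<Rightarrow> 'b metric \<Rightarrow> ('a \<Rightarrow> 'b) \<Rightarrow> nat \<Rightarrow> bool" where
  "fun_asdimAN_le X Y f m \<longleftrightarrow> (\<exists>a b c::real. a \<ge> 0 \<and> b \<ge> 0 \<and> c \<ge> 0 \<and>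
      fun_control_fun X Y f m (\<lambda>r R. a * r + b * R + c))"

definition fun_asdimAN :: "'a metric \<Rightarrow> 'b metric \<Rightarrow> ('a \<Rightarrow> 'b) \<Rightarrow> enat" where
  "fun_asdimAN X Y f = Inf {enat m | m. fun_asdimAN_le X Y f m}"

end

(* For a scale r, choose n + 1 families of R-disjoint bounded sets covering Y, with R much
   larger than r, and split the preimage of a neighbourhood of each of these sets into m + 1
   pieces whose rho-components are bounded.  A colouring of X is encoded as a cumulative
   partition of unity 0 = F 0 <= ... <= F M = 1 that varies little on r-close points: the sets
   where some increment is at least 1/M cover X, and their r-components have bounded diameter.
   Starting from the trivial partition, the families of Y are merged in one at a time; each
   merge interpolates, through piecewise linear ramps of the bump functions of the families,
   between the partition built so far and the bump stair of the pieces, and costs a single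
   extra level.  After n + 1 merges there are m + n + 1 levels on all of X, and all bounds are
   affine in r. *)

theory Submission
  imports Defs
begin

definition ramp :: "real \<Rightarrow> real \<Rightarrow> real \<Rightarrow> real" where
  "ramp s d t = min 1 (max 0 ((t - s) / d))"

lemma ramp_ge_0: "0 \<le> ramp s d t" and ramp_le_1: "ramp s d t \<le> 1"
  by (auto simp: ramp_def)

lemma ramp_lipschitz:
  assumes "0 < d" shows "\<bar>ramp s d t - ramp s d t'\<bar> \<le> \<bar>t - t'\<bar> / d"
proof -
  have "\<bar>ramp s d t - ramp s d t'\<bar> \<le> \<bar>(t - s) / d - (t' - s) / d\<bar>"
    unfolding ramp_def by (simp add: min_def max_def abs_if)
  also have "\<dots> = \<bar>t - t'\<bar> / d"
    using assms by (simp add: diff_divide_distrib[symmetric] abs_divide)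
  finally show ?thesis .
qed

lemma ramp_osc:
  assumes "0 < d" "\<bar>t - t'\<bar> \<le> e" shows "\<bar>ramp s d t - ramp s d t'\<bar> \<le> e / d"
  using ramp_lipschitz[OF assms(1), of s t t'] divide_right_mono[OF assms(2), of d] assms(1)
  by linarith

lemma ramp_pos_imp:
  assumes "0 < d" "0 < ramp s d t" shows "s < t"
proof -
  have "0 < (t - s) / d" using assms(2) by (auto simp: ramp_def min_def max_def split: if_splits)
  then show ?thesis using assms(1) by (simp add: zero_less_divide_iff)
qed

lemma ramp_less_1_imp:
  assumes "0 < d" "ramp s d t < 1" shows "t < s + d"
proof -
  have "(t - s) / d < 1" using assms(2) by (auto simp: ramp_def min_def max_def split: if_splits)
  then show ?thesis using assms(1) by (simp add: divide_less_eq)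
qed

lemma ramp_eq_1: "0 < d \<Longrightarrow> s + d \<le> t \<Longrightarrow> ramp s d t = 1"
  by (simp add: ramp_def le_divide_eq)

definition damp :: "real \<Rightarrow> real \<Rightarrow> real" where
  "damp p u = 1 - p * (1 - u)"

lemma damp_1 [simp]: "damp 1 u = u" and damp_0 [simp]: "damp 0 u = 1"
  and damp_of_1 [simp]: "damp p 1 = 1"
  by (simp_all add: damp_def)

lemma damp_bounds:
  assumes "0 \<le> p" "p \<le> 1" "0 \<le> u" "u \<le> 1"
  shows "0 \<le> damp p u" "damp p u \<le> 1"
  using assms mult_le_one[of p "1 - u"] by (simp_all add: damp_def)

lemma damp_diff: "damp p u' - damp p u = p * (u' - u)"
  by (simp add: damp_def algebra_simps)

lemma damp_mono: "0 \<le> p \<Longrightarrow> u \<le> u' \<Longrightarrow> damp p u \<le> damp p u'"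
  by (metis damp_diff diff_ge_0_iff_ge mult_nonneg_nonneg)

lemma damp_lipschitz:
  assumes "0 \<le> p" "p \<le> 1" "0 \<le> u" "u \<le> 1" "0 \<le> p'" "p' \<le> 1" "0 \<le> u'" "u' \<le> 1"
  shows "\<bar>damp p u - damp p' u'\<bar> \<le> \<bar>p - p'\<bar> + \<bar>u - u'\<bar>"
proof -
  have "damp p u - damp p' u' = (p' - p) * (1 - u') + p * (u - u')"
    by (simp add: damp_def algebra_simps)
  moreover have "\<bar>(p' - p) * (1 - u')\<bar> \<le> \<bar>p - p'\<bar>"
    using assms by (simp add: abs_mult abs_minus_commute mult_left_le)
  moreover have "\<bar>p * (u - u')\<bar> \<le> \<bar>u - u'\<bar>"
    using assms by (simp add: abs_mult mult_left_le_one_le)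
  ultimately show ?thesis
    using abs_triangle_ineq[of "(p' - p) * (1 - u')" "p * (u - u')"] by linarith
qed

lemma abs_min_diff_le: "\<bar>min (a::real) b - min c d\<bar> \<le> max \<bar>a - c\<bar> \<bar>b - d\<bar>"
proof -
  have "a - c \<le> \<bar>a - c\<bar>" "c - a \<le> \<bar>a - c\<bar>" "b - d \<le> \<bar>b - d\<bar>" "d - b \<le> \<bar>b - d\<bar>"
    "\<bar>a - c\<bar> \<le> max \<bar>a - c\<bar> \<bar>b - d\<bar>" "\<bar>b - d\<bar> \<le> max \<bar>a - c\<bar> \<bar>b - d\<bar>"
    "min a b \<le> a" "min a b \<le> b" "min c d \<le> c" "min c d \<le> d"
    "min a b = a \<or> min a b = b" "min c d = c \<or> min c d = d" by auto
  then show ?thesis unfolding abs_le_iff by linarith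
qed

lemma abs_max_diff_le: "\<bar>max (a::real) b - max c d\<bar> \<le> max \<bar>a - c\<bar> \<bar>b - d\<bar>"
proof -
  have "a - c \<le> \<bar>a - c\<bar>" "c - a \<le> \<bar>a - c\<bar>" "b - d \<le> \<bar>b - d\<bar>" "d - b \<le> \<bar>b - d\<bar>"
    "\<bar>a - c\<bar> \<le> max \<bar>a - c\<bar> \<bar>b - d\<bar>" "\<bar>b - d\<bar> \<le> max \<bar>a - c\<bar> \<bar>b - d\<bar>"
    "a \<le> max a b" "b \<le> max a b" "c \<le> max c d" "d \<le> max c d"
    "max a b = a \<or> max a b = b" "max c d = c \<or> max c d = d" by auto
  then show ?thesis unfolding abs_le_iff by linarith
qed

lemma mdist_self [simp]: "x \<in> mspace X \<Longrightarrow> mdist X x x = 0"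
  by simp

lemma mdist_triangle3:
  assumes "a \<in> mspace X" "b \<in> mspace X" "c \<in> mspace X" "d \<in> mspace X"
  shows "mdist X a d \<le> mdist X a b + mdist X b c + mdist X c d"
  using mdist_triangle[of a X b d] mdist_triangle[of b X c d] assms by linarith

section \<open>Chains and components\<close>

lemma r_chain_refl: "x \<in> A \<Longrightarrow> r_chain X r A x x"
  by (simp add: r_chain_def)

lemma r_chain_induct [consumes 1, case_names base step]:
  assumes "r_chain X r A x y"
    and "P x"
    and "\<And>u v. r_chain X r A x u \<Longrightarrow> P u \<Longrightarrow> v \<in> A \<Longrightarrow> mdist X u v \<le> r \<Longrightarrow> P v"
  shows "P y"
proof -
  have "x \<in> A" and "(\<lambda>u v. u \<in> A \<and> v \<in> A \<and> mdist X u v \<le> r)\<^sup>*\<^sup>* x y"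
    using assms(1) by (auto simp: r_chain_def)
  from this(2) have "r_chain X r A x y \<and> P y"
  proof (induction rule: rtranclp_induct)
    case base
    then show ?case using \<open>x \<in> A\<close> assms(2) by (simp add: r_chain_def)
  next
    case (step u v)
    then show ?case using assms(3)
      by (auto simp: r_chain_def intro: rtranclp.rtrancl_into_rtrancl)
  qed
  then show ?thesis ..
qed

lemma r_chain_mem:
  assumes "r_chain X r A x y" shows "x \<in> A" "y \<in> A"
proof -
  show "x \<in> A" using assms by (simp add: r_chain_def)
  from assms show "y \<in> A" by (induction rule: r_chain_induct) (use \<open>x \<in> A\<close> in simp_all)
qed

lemma r_chain_step:
  assumes "r_chain X r A x y" "z \<in> A" "mdist X y z \<le> r" shows "r_chain X r A x z"
  using assms r_chain_mem(2)[OF assms(1)] unfolding r_chain_def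
  by (auto intro: rtranclp.rtrancl_into_rtrancl)

lemma r_chain_trans:
  assumes "r_chain X r A x y" "r_chain X r A y z" shows "r_chain X r A x z"
  using assms(2) by (induction rule: r_chain_induct) (simp_all add: assms(1) r_chain_step)

lemma r_chain_sym:
  assumes "r_chain X r A x y" shows "r_chain X r A y x"
  using assms
proof (induction rule: r_chain_induct)
  case base
  show ?case using r_chain_mem(1)[OF assms] by (rule r_chain_refl)
next
  case (step u v)
  have "r_chain X r A v u"
    using r_chain_step[OF r_chain_refl[OF \<open>v \<in> A\<close>] r_chain_mem(2)[OF step(1)]]
      \<open>mdist X u v \<le> r\<close> by (simp add: mdist_commute)
  then show ?case using \<open>r_chain X r A u x\<close> by (rule r_chain_trans)
qed

lemma r_chain_transfer:
  assumes "r_chain X r A x y" and "\<And>z. r_chain X r A x z \<Longrightarrow> z \<in> B"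
  shows "r_chain X r B x y"
  using assms(1)
proof (induction rule: r_chain_induct)
  case base
  show ?case using assms(2)[OF r_chain_refl[OF r_chain_mem(1)[OF assms(1)]]] by (rule r_chain_refl)
next
  case (step u v)
  then show ?case using assms(2)[OF r_chain_step[OF step(1)]] r_chain_step[of X r B x u v] by simp
qed

lemma components_diam_leD:
  "components_diam_le X r A D \<Longrightarrow> r_chain X r A x y \<Longrightarrow> mdist X x y \<le> D"
  unfolding components_diam_le_def by (meson r_chain_mem)

lemma r_components_family:
  fixes X :: "'a metric" and r D :: real and C :: "'a set"
  defines "U \<equiv> (\<lambda>x. {y. r_chain X r C x y}) ` C"
  assumes "C \<subseteq> mspace X" and "components_diam_le X r C D"
  shows "r_disjoint X r U" and "\<And>A. A \<in> U \<Longrightarrow> A \<subseteq> mspace X \<and> diam_le X A D"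
    and "C \<subseteq> \<Union>U"
proof -
  show "r_disjoint X r U"
    unfolding r_disjoint_def
  proof (intro ballI impI)
    fix A B p q assume "A \<in> U" "B \<in> U" "A \<noteq> B" "p \<in> A" "q \<in> B"
    then obtain x1 x2 where A: "A = {y. r_chain X r C x1 y}" and B: "B = {y. r_chain X r C x2 y}"
      and chains: "r_chain X r C x1 p" "r_chain X r C x2 q"
      unfolding U_def by blast
    show "r \<le> mdist X p q"
    proof (rule ccontr)
      assume "\<not> r \<le> mdist X p q"
      then have "r_chain X r C x1 q"
        using chains r_chain_mem(2)[OF chains(2)] by (simp add: r_chain_step)
      then have "r_chain X r C x1 x2"
        using chains(2) by (blast intro: r_chain_trans r_chain_sym)
      then have "r_chain X r C x1 y \<longleftrightarrow> r_chain X r C x2 y" for y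
        by (blast intro: r_chain_trans r_chain_sym)
      then have "A = B" unfolding A B by (rule Collect_cong)
      with \<open>A \<noteq> B\<close> show False ..
    qed
  qed
  show "A \<subseteq> mspace X \<and> diam_le X A D" if "A \<in> U" for A
    using that assms(2,3) unfolding U_def diam_le_def
    by (auto dest: r_chain_mem intro!: components_diam_leD[of X r C D] intro: r_chain_trans r_chain_sym)
  show "C \<subseteq> \<Union>U"
    unfolding U_def using r_chain_refl by fastforce
qed

text \<open>Once the chain has come \<open>\<rho>/3\<close>-close to \<open>B\<close>, each of its points stays
  \<open>(\<rho>/3 + r + El)\<close>-close to one and the same \<open>\<rho>\<close>-component of \<open>B\<close>.\<close>

lemma r_chain_dist_le_near_union:
  assumes chain: "r_chain X r S x y" and S: "S \<subseteq> mspace X"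
    and T: "T \<subseteq> mspace X" "components_diam_le X r T El"
    and B: "B \<subseteq> mspace X" "components_diam_le X \<rho> B Ef"
    and cover: "\<And>z. r_chain X r S x z \<Longrightarrow> z \<in> T \<or> (\<exists>p\<in>B. mdist X z p < \<rho>/3)"
    and small: "El + 2*r \<le> \<rho>/3" and "0 \<le> El" "0 \<le> Ef" "0 \<le> r"
  shows "mdist X x y \<le> 2 * (El + r + \<rho>/3 + Ef)"
proof (cases "\<exists>z p. r_chain X r S x z \<and> p \<in> B \<and> mdist X z p < \<rho>/3")
  case False
  then have "r_chain X r T x y" using r_chain_transfer[OF chain] cover by blast
  then have "mdist X x y \<le> El" by (rule components_diam_leD[OF T(2)])
  then show ?thesis using assms(8-) by (simp add: algebra_simps)
next
  case True
  then obtain z1 p0 where z1: "r_chain X r S x z1" and p0: "p0 \<in> B" "mdist X z1 p0 < \<rho>/3"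
    by blast
  have SX: "z \<in> mspace X" if "r_chain X r S x' z" for x' z
    using r_chain_mem(2)[OF that] S by blast
  have BX: "p \<in> B" "p \<in> mspace X" if "r_chain X \<rho> B p0 p" for p
    using r_chain_mem(2)[OF that] B(1) by blast+
  have TX: "z \<in> T" "z \<in> mspace X" if "r_chain X r T q z" for q z
    using r_chain_mem(2)[OF that] T(1) by blast+
  define anchored where
    "anchored z \<longleftrightarrow> z \<in> mspace X \<and> (\<exists>p. r_chain X \<rho> B p0 p \<and> mdist X z p < \<rho>/3)" for z
  define tracked where
    "tracked z \<longleftrightarrow> anchored z \<or> (\<exists>w q. anchored w \<and> mdist X w q \<le> r \<and> r_chain X r T q z)" for z
  have anchor: "\<exists>p. r_chain X \<rho> B p0 p \<and> mdist X p z \<le> \<rho>/3 + r + El" if "tracked z" for z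
    using that unfolding tracked_def
  proof
    assume "anchored z"
    then obtain p where "r_chain X \<rho> B p0 p" "mdist X p z < \<rho>/3"
      unfolding anchored_def by (auto simp: mdist_commute)
    then show ?thesis using assms(9,11) by (intro exI[of _ p]) (simp add: algebra_simps)
  next
    assume "\<exists>w q. anchored w \<and> mdist X w q \<le> r \<and> r_chain X r T q z"
    then obtain w q p where w: "w \<in> mspace X" "mdist X w q \<le> r" and qz: "r_chain X r T q z"
      and p: "r_chain X \<rho> B p0 p" "mdist X w p < \<rho>/3"
      unfolding anchored_def by blast
    have "mdist X p z \<le> mdist X p w + mdist X w q + mdist X q z"
      using r_chain_mem(1)[OF qz] T(1) by (intro mdist_triangle3 BX(2)[OF p(1)] w(1) TX(2)[OF qz]) blast
    moreover have "mdist X q z \<le> El" by (rule components_diam_leD[OF T(2) qz])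
    ultimately have "mdist X p z \<le> \<rho>/3 + r + El"
      using p(2) w(2) mdist_commute[of X p w] by linarith
    then show ?thesis using p(1) by blast
  qed
  have propagate: "tracked v"
    if u: "tracked u" "u \<in> mspace X" and v: "v \<in> mspace X" and uv: "mdist X u v \<le> r"
      and "v \<in> T \<or> (\<exists>p'\<in>B. mdist X v p' < \<rho>/3)" for u v
    using that(5)
  proof
    assume "\<exists>p'\<in>B. mdist X v p' < \<rho>/3"
    then obtain p' where p': "p' \<in> B" "mdist X v p' < \<rho>/3" by blast
    obtain p where p: "r_chain X \<rho> B p0 p" "mdist X p u \<le> \<rho>/3 + r + El"
      using anchor[OF u(1)] by blast
    have "mdist X p p' \<le> mdist X p u + mdist X u v + mdist X v p'"
      using p'(1) B(1) by (intro mdist_triangle3 BX(2)[OF p(1)] u(2) v) blast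
    then have "mdist X p p' \<le> \<rho>" using p(2) p'(2) uv small by linarith
    then have "r_chain X \<rho> B p0 p'" by (rule r_chain_step[OF p(1) p'(1)])
    then show "tracked v" unfolding tracked_def anchored_def using v p'(2) by blast
  next
    assume "v \<in> T"
    from u(1) consider "anchored u" | "\<exists>w q. anchored w \<and> mdist X w q \<le> r \<and> r_chain X r T q u"
      unfolding tracked_def by blast
    then show "tracked v"
    proof cases
      case 1
      then show ?thesis unfolding tracked_def using uv r_chain_refl[OF \<open>v \<in> T\<close>] by blast
    next
      case 2
      then show ?thesis unfolding tracked_def using r_chain_step[OF _ \<open>v \<in> T\<close> uv] by blast
    qed
  qed
  have "tracked z" if "r_chain X r S z1 z" for z
    using that
  proof (induction rule: r_chain_induct)
    case base
    show ?case unfolding tracked_def anchored_def using SX[OF z1] r_chain_refl[OF p0(1)] p0(2) by blast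
  next
    case (step u v)
    have xv: "r_chain X r S x v" using r_chain_trans[OF z1 r_chain_step[OF step(1-3)]] .
    show ?case using propagate[OF step(4) SX[OF step(1)] SX[OF xv] step(3) cover[OF xv]] .
  qed
  then have "tracked x" "tracked y"
    using r_chain_sym[OF z1] r_chain_trans[OF r_chain_sym[OF z1] chain] by blast+
  have bound: "mdist X z p0 \<le> \<rho>/3 + r + El + Ef" if z: "tracked z" "z \<in> mspace X" for z
  proof -
    obtain p where p: "r_chain X \<rho> B p0 p" "mdist X p z \<le> \<rho>/3 + r + El"
      using anchor[OF z(1)] by blast
    have "mdist X z p0 \<le> mdist X z p + mdist X p p0"
      using p0(1) B(1) by (intro mdist_triangle z(2) BX(2)[OF p(1)]) blast
    moreover have "mdist X p0 p \<le> Ef" by (rule components_diam_leD[OF B(2) p(1)])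
    ultimately show ?thesis using p(2) by (simp add: mdist_commute)
  qed
  have "x \<in> mspace X" "y \<in> mspace X" "p0 \<in> mspace X"
    using SX[OF chain] r_chain_mem(1)[OF chain] S p0(1) B(1) by blast+
  then have "mdist X x y \<le> mdist X x p0 + mdist X y p0"
    using mdist_triangle[of x X p0 y] by (simp add: mdist_commute)
  then show ?thesis
    using bound[OF \<open>tracked x\<close> \<open>x \<in> mspace X\<close>] bound[OF \<open>tracked y\<close> \<open>y \<in> mspace X\<close>]
    by (simp add: algebra_simps)
qed

section \<open>Cumulative partitions of unity\<close>

definition increment :: "(nat \<Rightarrow> 'a \<Rightarrow> real) \<Rightarrow> nat \<Rightarrow> 'a \<Rightarrow> real" where
  "increment F c x = F c x - (if c = 0 then 0 else F (c - 1) x)"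

text \<open>The increments of \<open>F\<close> form a partition of unity with \<open>M + 1\<close> members.\<close>

definition cumulative_partition :: "'a metric \<Rightarrow> nat \<Rightarrow> (nat \<Rightarrow> 'a \<Rightarrow> real) \<Rightarrow> bool" where
  "cumulative_partition X M F \<longleftrightarrow>
     (\<forall>c. \<forall>x\<in>mspace X. 0 \<le> F c x \<and> F c x \<le> F (Suc c) x \<and> (M \<le> c \<longrightarrow> F c x = 1))"

definition osc_le :: "'a metric \<Rightarrow> real \<Rightarrow> ('a \<Rightarrow> real) \<Rightarrow> real \<Rightarrow> bool" where
  "osc_le X r g v \<longleftrightarrow> (\<forall>x\<in>mspace X. \<forall>y\<in>mspace X. mdist X x y \<le> r \<longrightarrow> \<bar>g x - g y\<bar> \<le> v)"

lemma osc_leD: "osc_le X r g v \<Longrightarrow> x \<in> mspace X \<Longrightarrow> y \<in> mspace X \<Longrightarrow> mdist X x y \<le> r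
    \<Longrightarrow> \<bar>g x - g y\<bar> \<le> v"
  by (simp add: osc_le_def)

lemma osc_leI:
  "(\<And>x y. x \<in> mspace X \<Longrightarrow> y \<in> mspace X \<Longrightarrow> mdist X x y \<le> r \<Longrightarrow> \<bar>g x - g y\<bar> \<le> v)
    \<Longrightarrow> osc_le X r g v"
  by (simp add: osc_le_def)

lemma osc_le_mono: "osc_le X r g v \<Longrightarrow> v \<le> v' \<Longrightarrow> osc_le X r g v'"
  by (force simp: osc_le_def)

lemma osc_le_min: "osc_le X r f a \<Longrightarrow> osc_le X r g b \<Longrightarrow> osc_le X r (\<lambda>x. min (f x) (g x)) (max a b)"
  unfolding osc_le_def by (meson abs_min_diff_le max.mono order_trans)

lemma osc_le_max: "osc_le X r f a \<Longrightarrow> osc_le X r g b \<Longrightarrow> osc_le X r (\<lambda>x. max (f x) (g x)) (max a b)"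
  unfolding osc_le_def by (meson abs_max_diff_le max.mono order_trans)

lemma osc_le_add:
  assumes "osc_le X r f a" "osc_le X r g b" shows "osc_le X r (\<lambda>x. f x + g x) (a + b)"
proof (rule osc_leI)
  fix x y assume xy: "x \<in> mspace X" "y \<in> mspace X" "mdist X x y \<le> r"
  have "\<bar>f x + g x - (f y + g y)\<bar> \<le> \<bar>f x - f y\<bar> + \<bar>g x - g y\<bar>"
    using abs_triangle_ineq[of "f x - f y" "g x - g y"] by (simp add: algebra_simps)
  then show "\<bar>f x + g x - (f y + g y)\<bar> \<le> a + b"
    using osc_leD[OF assms(1) xy] osc_leD[OF assms(2) xy] by linarith
qed

lemma osc_le_diff:
  assumes "osc_le X r f a" "osc_le X r g b" shows "osc_le X r (\<lambda>x. f x - g x) (a + b)"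
proof (rule osc_leI)
  fix x y assume xy: "x \<in> mspace X" "y \<in> mspace X" "mdist X x y \<le> r"
  have "\<bar>f x - g x - (f y - g y)\<bar> \<le> \<bar>f x - f y\<bar> + \<bar>g x - g y\<bar>"
    using abs_triangle_ineq4[of "f x - f y" "g x - g y"] by (simp add: algebra_simps)
  then show "\<bar>f x - g x - (f y - g y)\<bar> \<le> a + b"
    using osc_leD[OF assms(1) xy] osc_leD[OF assms(2) xy] by linarith
qed

lemma osc_le_ramp: "0 < d \<Longrightarrow> osc_le X r g e \<Longrightarrow> osc_le X r (\<lambda>x. ramp s d (g x)) (e / d)"
  unfolding osc_le_def using ramp_osc by blast

lemma osc_le_damp:
  assumes "osc_le X r p a" "osc_le X r u b" "\<And>x. x \<in> mspace X \<Longrightarrow> 0 \<le> p x \<and> p x \<le> 1"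
    "\<And>x. x \<in> mspace X \<Longrightarrow> 0 \<le> u x \<and> u x \<le> 1"
  shows "osc_le X r (\<lambda>x. damp (p x) (u x)) (a + b)"
proof (rule osc_leI)
  fix x y assume xy: "x \<in> mspace X" "y \<in> mspace X" "mdist X x y \<le> r"
  have "\<bar>damp (p x) (u x) - damp (p y) (u y)\<bar> \<le> \<bar>p x - p y\<bar> + \<bar>u x - u y\<bar>"
    using assms(3,4) xy by (intro damp_lipschitz) auto
  then show "\<bar>damp (p x) (u x) - damp (p y) (u y)\<bar> \<le> a + b"
    using osc_leD[OF assms(1) xy] osc_leD[OF assms(2) xy] by linarith
qed

lemma cumulative_partitionI:
  assumes "\<And>c x. x \<in> mspace X \<Longrightarrow> 0 \<le> F c x" "\<And>c x. x \<in> mspace X \<Longrightarrow> F c x \<le> F (Suc c) x"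
    "\<And>c x. x \<in> mspace X \<Longrightarrow> M \<le> c \<Longrightarrow> F c x = 1"
  shows "cumulative_partition X M F"
  using assms by (simp add: cumulative_partition_def)

lemma cumulative_partitionD:
  assumes "cumulative_partition X M F" "x \<in> mspace X"
  shows "0 \<le> F c x" "F c x \<le> F (Suc c) x" "M \<le> c \<Longrightarrow> F c x = 1"
    and "c \<le> c' \<Longrightarrow> F c x \<le> F c' x" "F c x \<le> 1"
proof -
  show mono: "F c x \<le> F c' x" if "c \<le> c'" for c c'
    using assms lift_Suc_mono_le[of "\<lambda>c. F c x", OF _ that] by (simp add: cumulative_partition_def)
  show "0 \<le> F c x" "F c x \<le> F (Suc c) x" "M \<le> c \<Longrightarrow> F c x = 1"
    using assms by (simp_all add: cumulative_partition_def)
  show "F c x \<le> 1"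
    using mono[of c "max c M"] assms by (simp add: cumulative_partition_def)
qed

lemma increment_nonneg:
  "cumulative_partition X M F \<Longrightarrow> x \<in> mspace X \<Longrightarrow> 0 \<le> increment F c x"
  by (cases c) (auto simp: increment_def cumulative_partitionD)

lemma increment_min_cases:
  "increment (\<lambda>j x. min (F j x) (H j x)) j x \<le> increment F j x
    \<or> increment (\<lambda>j x. min (F j x) (H j x)) j x \<le> increment H j x"
  by (cases j) (auto simp: increment_def min_def)

lemma sum_increment: "(\<Sum>c\<in>{1..K}. increment F c x) = F K x - F 0 x"
proof (induction K)
  case (Suc K)
  have "{1..Suc K} = insert (Suc K) {1..K}" by auto
  then show ?case using Suc by (simp add: increment_def)
qed simp

lemma cumulative_partition_increment_ge:
  assumes "cumulative_partition X M F" "x \<in> mspace X" "F 0 x = 0" "0 < M"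
  shows "\<exists>c\<in>{1..M}. 1 / real M \<le> increment F c x"
proof (rule ccontr)
  assume "\<not> ?thesis"
  then have "(\<Sum>c\<in>{1..M}. increment F c x) < (\<Sum>c\<in>{1..M}. 1 / real M)"
    using assms(4) by (intro sum_strict_mono) (auto simp: not_le)
  also have "\<dots> = 1" using assms(4) by simp
  finally show False
    using sum_increment[where K=M and F=F and x=x] assms(3) cumulative_partitionD(3)[OF assms(1,2) order_refl]
    by linarith
qed

lemma cumulative_partition_damp:
  assumes "cumulative_partition X M F" "\<And>x. 0 \<le> p x" "\<And>x. p x \<le> 1"
  shows "cumulative_partition X M (\<lambda>j x. damp (p x) (F j x))"
  using assms cumulative_partitionD[OF assms(1)]
  by (intro cumulative_partitionI) (simp_all add: damp_bounds damp_mono)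

lemma cumulative_partition_min:
  assumes "cumulative_partition X M F" "cumulative_partition X M' H"
  shows "cumulative_partition X (max M M') (\<lambda>j x. min (F j x) (H j x))"
  using cumulative_partitionD[OF assms(1)] cumulative_partitionD[OF assms(2)]
  by (intro cumulative_partitionI) (simp_all add: min.coboundedI1 min.coboundedI2 min.mono)

lemma cumulative_partition_shift:
  assumes "cumulative_partition X M F"
  shows "cumulative_partition X (Suc M) (\<lambda>c x. if c = 0 then 0 else F (c - 1) x)"
proof (rule cumulative_partitionI)
  fix c x assume "x \<in> mspace X"
  then show "0 \<le> (if c = 0 then 0 else F (c - 1) x)"
    and "(if c = 0 then 0 else F (c - 1) x) \<le> (if Suc c = 0 then 0 else F (Suc c - 1) x)"
    using cumulative_partitionD[OF assms] by (cases c; simp)+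
  show "Suc M \<le> c \<Longrightarrow> (if c = 0 then 0 else F (c - 1) x) = 1"
    using cumulative_partitionD(3)[OF assms \<open>x \<in> mspace X\<close>, of "c - 1"] by simp
qed

text \<open>Follow \<open>F\<close> below the level \<open>a x\<close> and \<open>H\<close> above it.\<close>

lemma cumulative_partition_splice:
  assumes "cumulative_partition X M F" "cumulative_partition X M' H" "\<And>x. 0 \<le> a x" "\<And>x. a x \<le> 1"
  shows "cumulative_partition X (max M M') (\<lambda>c x. min (a x) (F c x) + max (a x) (H c x) - a x)"
proof (rule cumulative_partitionI)
  fix c x assume x: "x \<in> mspace X"
  note F = cumulative_partitionD[OF assms(1) x] and H = cumulative_partitionD[OF assms(2) x]
  show "0 \<le> min (a x) (F c x) + max (a x) (H c x) - a x"
    using F(1)[of c] assms(3)[of x] by linarith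
  show "min (a x) (F c x) + max (a x) (H c x) - a x
      \<le> min (a x) (F (Suc c) x) + max (a x) (H (Suc c) x) - a x"
    using min.mono[OF order_refl[of "a x"] F(2)[of c]] max.mono[OF order_refl[of "a x"] H(2)[of c]]
    by linarith
  show "min (a x) (F c x) + max (a x) (H c x) - a x = 1" if "max M M' \<le> c"
  proof -
    have "F c x = 1" "H c x = 1" using that F(3) H(3) by simp_all
    then show ?thesis using assms(4)[of x] by (simp add: min_def max_def)
  qed
qed

section \<open>Bump functions\<close>

text \<open>\<open>bump X s S x = max 0 (1 - dist(x, S) / s)\<close>.\<close>

definition bump :: "'a metric \<Rightarrow> real \<Rightarrow> 'a set \<Rightarrow> 'a \<Rightarrow> real" where
  "bump X s S x = (if S = {} then 0 else (SUP p\<in>S. max 0 (1 - mdist X x p / s)))"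

lemma bump_bdd_above: "0 < s \<Longrightarrow> bdd_above ((\<lambda>p. max 0 (1 - mdist X x p / s)) ` S)"
  by (intro bdd_aboveI[where M=1]) auto

lemma bump_ge_0: "0 < s \<Longrightarrow> 0 \<le> bump X s S x"
  unfolding bump_def using bump_bdd_above[of s X x S]
  by (auto intro: cSUP_upper2[where u = 0])

lemma bump_le_1: "0 < s \<Longrightarrow> bump X s S x \<le> 1"
  unfolding bump_def by (auto intro!: cSUP_least)

lemma bump_eq_1: "0 < s \<Longrightarrow> x \<in> S \<Longrightarrow> x \<in> mspace X \<Longrightarrow> bump X s S x = 1"
proof -
  assume s: "0 < s" and x: "x \<in> S" "x \<in> mspace X"
  have "1 \<le> (SUP p\<in>S. max 0 (1 - mdist X x p / s))"
    using cSUP_upper[OF x(1) bump_bdd_above[OF s, of X x S]] x(2) by simp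
  then have "1 \<le> bump X s S x" using x(1) by (auto simp: bump_def)
  then show ?thesis using bump_le_1[OF s, of X S x] by simp
qed

lemma bump_pos_imp: "0 < s \<Longrightarrow> 0 < bump X s S x \<Longrightarrow> \<exists>p\<in>S. mdist X x p < s"
proof (rule ccontr)
  assume s: "0 < s" and pos: "0 < bump X s S x" and far: "\<not> (\<exists>p\<in>S. mdist X x p < s)"
  then have "S \<noteq> {}" by (auto simp: bump_def)
  moreover have "(SUP p\<in>S. max 0 (1 - mdist X x p / s)) \<le> 0"
    using far s \<open>S \<noteq> {}\<close> by (intro cSUP_least) (auto simp: not_less)
  ultimately show False using pos by (simp add: bump_def)
qed

lemma bump_lipschitz:
  assumes s: "0 < s" and S: "S \<subseteq> mspace X" and x: "x \<in> mspace X" and y: "y \<in> mspace X"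
  shows "\<bar>bump X s S x - bump X s S y\<bar> \<le> mdist X x y / s"
proof (cases "S = {}")
  case True
  then show ?thesis using s by (simp add: bump_def)
next
  case False
  have one_side: "bump X s S u \<le> bump X s S w + mdist X u w / s"
    if u: "u \<in> mspace X" and w: "w \<in> mspace X" for u w
  proof -
    have "max 0 (1 - mdist X u p / s) \<le> bump X s S w + mdist X u w / s" if p: "p \<in> S" for p
    proof -
      have "mdist X w p \<le> mdist X u w + mdist X u p"
        using mdist_triangle[OF w u] p S by (simp add: mdist_commute subset_iff)
      then have "mdist X w p / s \<le> mdist X u w / s + mdist X u p / s"
        using divide_right_mono[of _ _ s] s by (metis add_divide_distrib less_imp_le)
      moreover have "max 0 (1 - mdist X w p / s) \<le> bump X s S w"
        using cSUP_upper[OF p bump_bdd_above[OF s, of X w S]] False by (simp add: bump_def)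
      moreover have "0 \<le> mdist X u w / s" using s by simp
      ultimately show ?thesis
        using max.cobounded1[of 0 "1 - mdist X w p / s"] max.cobounded2[of 0 "1 - mdist X w p / s"]
        by (intro max.boundedI) linarith+
    qed
    then show ?thesis using False by (simp add: bump_def cSUP_least)
  qed
  show ?thesis
    using one_side[OF x y] one_side[OF y x] by (simp add: abs_le_iff mdist_commute)
qed

fun bump_max :: "'a metric \<Rightarrow> real \<Rightarrow> (nat \<Rightarrow> 'a set) \<Rightarrow> nat \<Rightarrow> 'a \<Rightarrow> real" where
  "bump_max X s B 0 x = bump X s (B 0) x"
| "bump_max X s B (Suc j) x = max (bump_max X s B j x) (bump X s (B (Suc j)) x)"

definition bump_stair :: "'a metric \<Rightarrow> real \<Rightarrow> nat \<Rightarrow> (nat \<Rightarrow> 'a set) \<Rightarrow> nat \<Rightarrow> 'a \<Rightarrow> real" where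
  "bump_stair X s m B j x = (if m \<le> j then 1 else bump_max X s B j x)"

lemma bump_max_bounds: "0 < s \<Longrightarrow> 0 \<le> bump_max X s B j x \<and> bump_max X s B j x \<le> 1"
  by (induction j) (auto simp: bump_ge_0 bump_le_1 le_max_iff_disj)

lemma bump_le_bump_max: "i \<le> j \<Longrightarrow> bump X s (B i) x \<le> bump_max X s B j x"
  by (induction j) (auto simp: le_Suc_eq le_max_iff_disj)

lemma bump_max_lipschitz:
  assumes "0 < s" "\<And>i. i \<le> j \<Longrightarrow> B i \<subseteq> mspace X" "x \<in> mspace X" "y \<in> mspace X"
  shows "\<bar>bump_max X s B j x - bump_max X s B j y\<bar> \<le> mdist X x y / s"
  using assms(2)
proof (induction j)
  case 0
  then show ?case using bump_lipschitz[OF assms(1) _ assms(3,4)] by simp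
next
  case (Suc j)
  then show ?case
    by (simp, intro order_trans[OF abs_max_diff_le] max.boundedI)
      (simp_all add: bump_lipschitz[OF assms(1) _ assms(3,4)])
qed

lemma cumulative_partition_bump_stair:
  assumes "0 < s" shows "cumulative_partition X m (bump_stair X s m B)"
proof (rule cumulative_partitionI)
  fix c x
  show "0 \<le> bump_stair X s m B c x"
    using bump_max_bounds[OF assms, of X B c x] by (simp add: bump_stair_def)
  show "bump_stair X s m B c x \<le> bump_stair X s m B (Suc c) x"
    using bump_max_bounds[OF assms, of X B c x] by (simp add: bump_stair_def)
qed (simp add: bump_stair_def)

lemma bump_stair_lipschitz:
  assumes "0 < s" "\<And>i. i < m \<Longrightarrow> B i \<subseteq> mspace X" "x \<in> mspace X" "y \<in> mspace X"
  shows "\<bar>bump_stair X s m B j x - bump_stair X s m B j y\<bar> \<le> mdist X x y / s"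
proof (cases "m \<le> j")
  case True
  then show ?thesis using assms(1) by (simp add: bump_stair_def)
next
  case False
  then have "\<bar>bump_max X s B j x - bump_max X s B j y\<bar> \<le> mdist X x y / s"
    using assms(2) by (intro bump_max_lipschitz[OF assms(1) _ assms(3,4)]) simp
  then show ?thesis using False by (simp add: bump_stair_def)
qed

lemma bump_stair_increment_pos_imp:
  assumes s: "0 < s" and x: "x \<in> mspace X" "x \<in> (\<Union>i\<le>m. B i)"
    and pos: "0 < increment (bump_stair X s m B) j x"
  shows "\<exists>p\<in>B j. mdist X x p < s"
proof -
  have "j \<le> m"
  proof (rule ccontr)
    assume "\<not> j \<le> m"
    then have "increment (bump_stair X s m B) j x = 0" by (simp add: increment_def bump_stair_def)
    with pos show False by simp
  qed
  have self: "mdist X x x < s" using x(1) s by simp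
  show ?thesis
  proof (cases j)
    case 0
    show ?thesis
    proof (cases "m = 0")
      case True
      then have "x \<in> B j" using x(2) 0 by simp
      then show ?thesis using self by blast
    next
      case False
      then have "increment (bump_stair X s m B) 0 x = bump X s (B 0) x"
        by (simp add: increment_def bump_stair_def)
      then have "0 < bump X s (B j) x" using pos unfolding 0 by simp
      then show ?thesis by (rule bump_pos_imp[OF s])
    qed
  next
    case (Suc j')
    have inc: "increment (bump_stair X s m B) j x
        = bump_stair X s m B (Suc j') x - bump_stair X s m B j' x"
      unfolding Suc by (simp add: increment_def)
    show ?thesis
    proof (cases "j = m")
      case True
      then have "bump_stair X s m B (Suc j') x = 1" "bump_stair X s m B j' x = bump_max X s B j' x"
        using Suc by (simp_all add: bump_stair_def)
      then have "bump_max X s B j' x < 1" using pos inc by simp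
      then have "x \<notin> B i" if "i \<le> j'" for i
        using bump_le_bump_max[OF that, of X s B x] bump_eq_1[OF s _ x(1), of "B i"] by fastforce
      moreover obtain i where "i \<le> m" "x \<in> B i" using x(2) by blast
      ultimately have "x \<in> B j" using Suc True by (metis le_SucE)
      then show ?thesis using self by blast
    next
      case False
      then have "bump_stair X s m B (Suc j') x = max (bump_max X s B j' x) (bump X s (B j) x)"
        "bump_stair X s m B j' x = bump_max X s B j' x"
        using Suc \<open>j \<le> m\<close> by (simp_all add: bump_stair_def)
      then have "0 < bump X s (B j) x"
        using pos inc bump_max_bounds[OF s, of X B j' x] by (simp add: max_def split: if_splits)
      then show ?thesis by (rule bump_pos_imp[OF s])
    qed
  qed
qed

section \<open>Adding one colour\<close>

text \<open>One step of the construction: given a cumulative partition \<open>L\<close> with \<open>M + 1\<close> levels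
  that controls the region \<open>\<tau> \<le> W\<close>, and a cumulative partition \<open>N\<close> with \<open>m + 1\<close> levels
  built on the tiles of one more family of \<open>Y\<close> (living where \<open>h > 0\<close>), produce one with
  \<open>M + 2\<close> levels controlling \<open>\<tau> + 2\<delta> \<le> max W h\<close>.  Below the level \<open>ramp (\<tau> + \<delta>) \<delta> (W x)\<close>
  the result follows \<open>L\<close>, above it the minimum of \<open>L\<close> and \<open>N\<close> shifted up by one level.\<close>

definition merge_stage :: "real \<Rightarrow> real \<Rightarrow> ('a \<Rightarrow> real) \<Rightarrow> ('a \<Rightarrow> real) \<Rightarrow> (nat \<Rightarrow> 'a \<Rightarrow> real)
    \<Rightarrow> (nat \<Rightarrow> 'a \<Rightarrow> real) \<Rightarrow> nat \<Rightarrow> 'a \<Rightarrow> real" where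
  "merge_stage \<tau> \<delta> W h L N c x =
    (let a = ramp (\<tau> + \<delta>) \<delta> (W x);
         old = (\<lambda>j. damp (ramp \<tau> \<delta> (W x)) (L j x));
         joint = (\<lambda>j. min (old j) (damp (ramp \<delta> \<delta> (h x)) (N j x)));
         shifted = (if c = 0 then 0 else joint (c - 1))
     in min a (old c) + max a shifted - a)"

locale merge_setting =
  fixes X :: "'a metric" and r \<theta> \<delta> \<tau> \<rho> El Ef v eps w :: real and m M :: nat
    and W h :: "'a \<Rightarrow> real" and L N :: "nat \<Rightarrow> 'a \<Rightarrow> real"
    and tile :: "'a \<Rightarrow> 'c" and piece :: "'c \<Rightarrow> nat \<Rightarrow> 'a set"
  assumes r_pos: "0 < r" and \<theta>_pos: "0 < \<theta>" and \<delta>_pos: "0 < \<delta>" and \<tau>_nonneg: "0 \<le> \<tau>"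
    and El_nonneg: "0 \<le> El" and Ef_nonneg: "0 \<le> Ef"
    and v_nonneg: "0 \<le> v" and eps_nonneg: "0 \<le> eps" and w_nonneg: "0 \<le> w" and m_le_M: "m \<le> M"
    and L_partition: "cumulative_partition X M L"
    and L_osc: "\<And>c. osc_le X r (L c) v"
    and L_components:
      "\<And>c. components_diam_le X r {x \<in> mspace X. \<tau> \<le> W x \<and> \<theta> \<le> increment L c x} El"
    and L_zero: "\<And>x. x \<in> mspace X \<Longrightarrow> \<tau> < W x \<Longrightarrow> L 0 x = 0"
    and W_osc: "osc_le X r W eps" and h_osc: "osc_le X r h eps"
    and N_partition: "cumulative_partition X m N"
    and N_osc: "\<And>j x y. x \<in> mspace X \<Longrightarrow> y \<in> mspace X \<Longrightarrow> mdist X x y \<le> r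
      \<Longrightarrow> 0 < h x \<Longrightarrow> 0 < h y \<Longrightarrow> \<bar>N j x - N j y\<bar> \<le> w"
    and N_near: "\<And>j x. x \<in> mspace X \<Longrightarrow> 0 < h x \<Longrightarrow> 0 < increment N j x
      \<Longrightarrow> \<exists>p\<in>piece (tile x) j. mdist X x p < \<rho>/3"
    and tile_eq: "\<And>x y. x \<in> mspace X \<Longrightarrow> y \<in> mspace X \<Longrightarrow> mdist X x y \<le> r
      \<Longrightarrow> 0 < h x \<Longrightarrow> 0 < h y \<Longrightarrow> tile x = tile y"
    and piece_props: "\<And>x j. x \<in> mspace X \<Longrightarrow> 0 < h x
      \<Longrightarrow> piece (tile x) j \<subseteq> mspace X \<and> components_diam_le X \<rho> (piece (tile x) j) Ef"
    and eps_less: "eps < \<delta>" and osc_small: "2 * (eps/\<delta> + v) < \<theta>"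
    and \<rho>_large: "El + 2*r \<le> \<rho>/3"
begin

abbreviation G :: "nat \<Rightarrow> 'a \<Rightarrow> real" where
  "G \<equiv> merge_stage \<tau> \<delta> W h L N"

definition cutoff :: "'a \<Rightarrow> real" where
  "cutoff x = ramp (\<tau> + \<delta>) \<delta> (W x)"

definition old_stair :: "nat \<Rightarrow> 'a \<Rightarrow> real" where
  "old_stair j x = damp (ramp \<tau> \<delta> (W x)) (L j x)"

definition new_stair :: "nat \<Rightarrow> 'a \<Rightarrow> real" where
  "new_stair j x = damp (ramp \<delta> \<delta> (h x)) (N j x)"

definition joint_stair :: "nat \<Rightarrow> 'a \<Rightarrow> real" where
  "joint_stair j x = min (old_stair j x) (new_stair j x)"

definition shifted_stair :: "nat \<Rightarrow> 'a \<Rightarrow> real" where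
  "shifted_stair c x = (if c = 0 then 0 else joint_stair (c - 1) x)"

lemma G_eq: "G c x = min (cutoff x) (old_stair c x) + max (cutoff x) (shifted_stair c x) - cutoff x"
  by (simp add: merge_stage_def Let_def cutoff_def old_stair_def new_stair_def joint_stair_def
      shifted_stair_def)

lemma cutoff_bounds: "0 \<le> cutoff x" "cutoff x \<le> 1"
  by (simp_all add: cutoff_def ramp_ge_0 ramp_le_1)

lemma old_stair_partition: "cumulative_partition X M old_stair"
  unfolding old_stair_def[abs_def]
  by (intro cumulative_partition_damp L_partition ramp_ge_0 ramp_le_1)

lemma new_stair_partition: "cumulative_partition X m new_stair"
  unfolding new_stair_def[abs_def]
  by (intro cumulative_partition_damp N_partition ramp_ge_0 ramp_le_1)

lemma shifted_stair_partition: "cumulative_partition X (Suc M) shifted_stair"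
proof -
  have "cumulative_partition X M joint_stair"
    using cumulative_partition_min[OF old_stair_partition new_stair_partition] m_le_M
    by (simp add: max_absorb1 joint_stair_def[abs_def])
  from cumulative_partition_shift[OF this] show ?thesis unfolding shifted_stair_def[abs_def] .
qed

lemma merge_partition: "cumulative_partition X (Suc M) G"
  using cumulative_partition_splice[OF old_stair_partition shifted_stair_partition cutoff_bounds]
  by (simp add: G_eq[abs_def] max_absorb2)

lemma merge_zero: "x \<in> mspace X \<Longrightarrow> G 0 x = 0"
proof -
  assume x: "x \<in> mspace X"
  have "min (cutoff x) (old_stair 0 x) = 0"
  proof (cases "cutoff x = 0")
    case True
    then show ?thesis using cumulative_partitionD(1)[OF old_stair_partition x] by simp
  next
    case False
    then have "0 < ramp (\<tau> + \<delta>) \<delta> (W x)" using cutoff_bounds(1)[of x] by (simp add: cutoff_def)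
    then have "\<tau> + \<delta> < W x" by (rule ramp_pos_imp[OF \<delta>_pos])
    then have "old_stair 0 x = 0"
      using L_zero[OF x] ramp_eq_1[OF \<delta>_pos, of \<tau> "W x"] \<delta>_pos by (simp add: old_stair_def)
    then show ?thesis using cutoff_bounds(1)[of x] by simp
  qed
  then show ?thesis using cutoff_bounds by (simp add: G_eq shifted_stair_def max_absorb1)
qed

lemma cutoff_osc: "osc_le X r cutoff (eps/\<delta>)"
  unfolding cutoff_def[abs_def] by (rule osc_le_ramp[OF \<delta>_pos W_osc])

lemma old_stair_osc: "osc_le X r (old_stair j) (eps/\<delta> + v)"
  unfolding old_stair_def[abs_def]
  using cumulative_partitionD(1,5)[OF L_partition]
  by (intro osc_le_damp osc_le_ramp[OF \<delta>_pos W_osc] L_osc) (auto simp: ramp_ge_0 ramp_le_1)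

lemma new_stair_osc: "osc_le X r (new_stair j) (eps/\<delta> + w)"
proof (rule osc_leI)
  fix x y assume xy: "x \<in> mspace X" "y \<in> mspace X" "mdist X x y \<le> r"
  show "\<bar>new_stair j x - new_stair j y\<bar> \<le> eps/\<delta> + w"
  proof (cases "ramp \<delta> \<delta> (h x) = 0 \<and> ramp \<delta> \<delta> (h y) = 0")
    case True
    then show ?thesis using eps_nonneg \<delta>_pos w_nonneg by (simp add: new_stair_def)
  next
    case False
    \<comment> \<open>one of the points has \<open>h > \<delta>\<close>, hence both have \<open>h > 0\<close>\<close>
    then have "\<delta> < h x \<or> \<delta> < h y"
      using ramp_pos_imp[OF \<delta>_pos] ramp_ge_0 by (metis order_le_less)
    then have "0 < h x" "0 < h y" using osc_leD[OF h_osc xy] eps_less by linarith+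
    then have "\<bar>N j x - N j y\<bar> \<le> w" by (rule N_osc[OF xy])
    moreover have "\<bar>ramp \<delta> \<delta> (h x) - ramp \<delta> \<delta> (h y)\<bar> \<le> eps/\<delta>"
      using osc_leD[OF osc_le_ramp[OF \<delta>_pos h_osc] xy] .
    moreover have "\<bar>new_stair j x - new_stair j y\<bar>
        \<le> \<bar>ramp \<delta> \<delta> (h x) - ramp \<delta> \<delta> (h y)\<bar> + \<bar>N j x - N j y\<bar>"
      unfolding new_stair_def using cumulative_partitionD(1,5)[OF N_partition] xy
      by (intro damp_lipschitz) (auto simp: ramp_ge_0 ramp_le_1)
    ultimately show ?thesis by linarith
  qed
qed

lemma shifted_stair_osc: "osc_le X r (shifted_stair c) (2*eps/\<delta> + v + w)"
proof (cases c)
  case 0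
  then show ?thesis using eps_nonneg \<delta>_pos v_nonneg w_nonneg by (simp add: osc_le_def shifted_stair_def)
next
  case (Suc j)
  have "osc_le X r (joint_stair j) (max (eps/\<delta> + v) (eps/\<delta> + w))"
    unfolding joint_stair_def[abs_def] by (rule osc_le_min[OF old_stair_osc new_stair_osc])
  moreover have "max (eps/\<delta> + v) (eps/\<delta> + w) \<le> 2*eps/\<delta> + v + w"
    using v_nonneg w_nonneg divide_nonneg_pos[OF eps_nonneg \<delta>_pos] by (simp add: max_def)
  ultimately show ?thesis
    unfolding Suc shifted_stair_def[abs_def] by (simp add: osc_le_mono)
qed

lemma merge_osc: "osc_le X r (G c) (4*eps/\<delta> + 2* v + w)"
proof -
  have "osc_le X r (\<lambda>x. min (cutoff x) (old_stair c x) + max (cutoff x) (shifted_stair c x) - cutoff x)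
      (max (eps/\<delta>) (eps/\<delta> + v) + max (eps/\<delta>) (2*eps/\<delta> + v + w) + eps/\<delta>)"
    by (intro osc_le_diff osc_le_add osc_le_min osc_le_max cutoff_osc old_stair_osc shifted_stair_osc)
  then show ?thesis unfolding G_eq[abs_def] using v_nonneg w_nonneg eps_nonneg \<delta>_pos
    by (elim osc_le_mono) (simp add: max_def field_simps)
qed

definition old_level :: "nat \<Rightarrow> 'a set" where
  "old_level j = {x \<in> mspace X. \<tau> \<le> W x \<and> \<theta> \<le> increment L j x}"

definition merge_level :: "nat \<Rightarrow> 'a set" where
  "merge_level c = {x \<in> mspace X. \<tau> + 2*\<delta> \<le> max (W x) (h x) \<and> \<theta> \<le> increment G c x}"

text \<open>The increment of \<open>G\<close> splits into a part coming from \<open>L\<close> and a part coming from the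
  shifted joint stair; at most one of them is nonzero.\<close>

definition old_part :: "nat \<Rightarrow> 'a \<Rightarrow> real" where
  "old_part c x = min (cutoff x) (old_stair c x)
     - (if c = 0 then 0 else min (cutoff x) (old_stair (c - 1) x))"

definition new_part :: "nat \<Rightarrow> 'a \<Rightarrow> real" where
  "new_part c x = max (cutoff x) (shifted_stair c x)
     - (if c = 0 then cutoff x else max (cutoff x) (shifted_stair (c - 1) x))"

lemma increment_G: "increment G c x = old_part c x + new_part c x"
  by (cases c) (simp_all add: increment_def G_eq old_part_def new_part_def)

lemma old_part_nonneg: "x \<in> mspace X \<Longrightarrow> 0 \<le> old_part c x"
  using cumulative_partitionD(1,2)[OF old_stair_partition] cutoff_bounds(1)[of x]
    min.mono[OF order_refl, of "old_stair (c - 1) x" "old_stair c x" "cutoff x"]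
  by (cases c) (simp_all add: old_part_def)

lemma new_part_zero_if_old_part_pos:
  assumes x: "x \<in> mspace X" and pos: "0 < old_part c x"
  shows "new_part c x = 0"
proof (cases c)
  case 0
  then show ?thesis using cutoff_bounds(1)[of x] by (simp add: new_part_def shifted_stair_def)
next
  case (Suc j)
  have "old_stair j x < cutoff x"
  proof (rule ccontr)
    assume "\<not> old_stair j x < cutoff x"
    moreover have "old_stair j x \<le> old_stair c x"
      using cumulative_partitionD(2)[OF old_stair_partition x] Suc by simp
    ultimately show False using pos Suc by (simp add: old_part_def min_def)
  qed
  moreover have "shifted_stair c x \<le> old_stair j x"
    using Suc by (simp add: shifted_stair_def joint_stair_def)
  moreover have "shifted_stair j x \<le> shifted_stair c x"
    using cumulative_partitionD(2)[OF shifted_stair_partition x] Suc by simp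
  ultimately show ?thesis using Suc by (simp add: new_part_def max_def)
qed

lemma old_part_osc: "osc_le X r (old_part c) (2 * (eps/\<delta> + v))"
proof -
  have min_osc: "osc_le X r (\<lambda>x. min (cutoff x) (old_stair j x)) (eps/\<delta> + v)" for j
    using osc_le_min[OF cutoff_osc old_stair_osc, of j] by (simp add: max_def v_nonneg)
  show ?thesis
  proof (cases c)
    case 0
    then show ?thesis
      using min_osc[of 0] v_nonneg divide_nonneg_pos[OF eps_nonneg \<delta>_pos]
      by (simp add: old_part_def[abs_def] osc_le_mono)
  next
    case (Suc j)
    then show ?thesis
      using osc_le_diff[OF min_osc[of c] min_osc[of j]] by (simp add: old_part_def[abs_def])
  qed
qed

lemma old_part_imp:
  assumes x: "x \<in> mspace X" and \<theta>: "\<theta> \<le> old_part c x"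
  shows "x \<in> old_level c"
proof -
  have "min (cutoff x) (old_stair c x) \<le> cutoff x" "0 \<le> min (cutoff x) (old_stair (c - 1) x)"
    using cumulative_partitionD(1)[OF old_stair_partition x, of "c - 1"] cutoff_bounds(1)[of x]
    by simp_all
  moreover have "old_part c x = min (cutoff x) (old_stair c x) - min (cutoff x) (old_stair (c - 1) x)
      \<or> old_part c x = min (cutoff x) (old_stair c x)"
    by (simp add: old_part_def)
  ultimately have "old_part c x \<le> cutoff x" by linarith
  then have "0 < ramp (\<tau> + \<delta>) \<delta> (W x)" using \<theta> \<theta>_pos by (simp add: cutoff_def)
  then have W: "\<tau> + \<delta> < W x" by (rule ramp_pos_imp[OF \<delta>_pos])
  then have old: "old_stair j x = L j x" for j
    using ramp_eq_1[OF \<delta>_pos, of \<tau> "W x"] by (simp add: old_stair_def)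
  have "old_part c x \<le> increment L c x"
  proof (cases c)
    case (Suc j)
    have "L j x \<le> L c x" using cumulative_partitionD(2)[OF L_partition x] Suc by simp
    then show ?thesis using Suc by (simp add: old_part_def increment_def old min_def)
  qed (simp add: old_part_def increment_def old)
  then show ?thesis using x W \<theta> \<delta>_pos by (simp add: old_level_def)
qed

lemma new_part_imp:
  assumes x: "x \<in> mspace X" "\<tau> + 2*\<delta> \<le> max (W x) (h x)" and \<theta>: "\<theta> \<le> new_part c x"
  shows "c \<noteq> 0" "0 < h x"
    and "x \<in> old_level (c - 1) \<or> (\<exists>p\<in>piece (tile x) (c - 1). mdist X x p < \<rho>/3)"
proof -
  have "new_part 0 x = 0" using cutoff_bounds(1)[of x] by (simp add: new_part_def shifted_stair_def)
  then show c: "c \<noteq> 0" using \<theta> \<theta>_pos by (cases c) auto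
  then obtain j where j: "c = Suc j" by (cases c) auto
  have "new_part c x = max (cutoff x) (shifted_stair c x) - max (cutoff x) (shifted_stair j x)"
    using j by (simp add: new_part_def)
  then have "new_part c x \<le> 1 - cutoff x"
    using cumulative_partitionD(5)[OF shifted_stair_partition x(1), of c] cutoff_bounds(2)[of x]
      max.cobounded1[of "cutoff x" "shifted_stair j x"] by (simp add: max_def)
  then have "ramp (\<tau> + \<delta>) \<delta> (W x) < 1" using \<theta> \<theta>_pos by (simp add: cutoff_def)
  then have "W x < \<tau> + 2*\<delta>" using ramp_less_1_imp[OF \<delta>_pos] by fastforce
  then have h: "\<tau> + 2*\<delta> \<le> h x" using x(2) by (simp add: max_def split: if_splits)
  then show hpos: "0 < h x" using \<tau>_nonneg \<delta>_pos by linarith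
  have new: "new_stair i x = N i x" for i
    using h \<tau>_nonneg ramp_eq_1[OF \<delta>_pos, of \<delta> "h x"] by (simp add: new_stair_def)
  have "new_part c x \<le> increment joint_stair j x"
    using cumulative_partitionD(2)[OF shifted_stair_partition x(1), of j] j
    by (cases j) (simp_all add: new_part_def shifted_stair_def increment_def max_def)
  then have jump: "\<theta> \<le> increment joint_stair j x" using \<theta> by linarith
  have near: "\<exists>p\<in>piece (tile x) j. mdist X x p < \<rho>/3" if "\<theta> \<le> increment new_stair j x"
  proof -
    have "increment new_stair j x = increment N j x" by (simp add: increment_def new)
    then show ?thesis using N_near[OF x(1) hpos, of j] that \<theta>_pos by simp
  qed
  show "x \<in> old_level (c - 1) \<or> (\<exists>p\<in>piece (tile x) (c - 1). mdist X x p < \<rho>/3)"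
  proof (cases j)
    case 0
    then have "\<theta> \<le> increment new_stair j x"
      using jump by (simp add: increment_def joint_stair_def)
    then show ?thesis using near j by simp
  next
    case (Suc i)
    consider "\<theta> \<le> increment old_stair j x" | "\<theta> \<le> increment new_stair j x"
      using jump increment_min_cases[of old_stair new_stair j x]
      unfolding joint_stair_def[abs_def] by linarith
    then show ?thesis
    proof cases
      case 1
      have step: "increment old_stair j x = ramp \<tau> \<delta> (W x) * increment L j x"
        using Suc by (simp add: increment_def old_stair_def damp_diff)
      have "0 \<le> increment L j x" by (rule increment_nonneg[OF L_partition x(1)])
      then have "increment old_stair j x \<le> increment L j x"
        unfolding step by (simp add: ramp_le_1 mult_left_le_one_le ramp_ge_0)
      moreover have "0 < ramp \<tau> \<delta> (W x)"
        using 1 step \<theta>_pos by (metis mult_eq_0_iff order_le_less ramp_ge_0 not_less)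
      then have "\<tau> < W x" by (rule ramp_pos_imp[OF \<delta>_pos])
      ultimately show ?thesis using 1 x(1) j by (simp add: old_level_def)
    next
      case 2
      then show ?thesis using near j by simp
    qed
  qed
qed

lemma old_level_subset: "old_level j \<subseteq> mspace X"
  by (auto simp: old_level_def)

lemma old_level_components: "components_diam_le X r (old_level j) El"
  unfolding old_level_def by (rule L_components)

lemma merge_level_split:
  assumes "x \<in> merge_level c" shows "\<theta> \<le> old_part c x \<or> \<theta> \<le> new_part c x"
proof -
  have x: "x \<in> mspace X" "\<theta> \<le> old_part c x + new_part c x"
    using assms by (auto simp: merge_level_def increment_G)
  show ?thesis
    using new_part_zero_if_old_part_pos[OF x(1)] old_part_nonneg[OF x(1), of c] x(2)
    by (cases "0 < old_part c x") auto
qed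

lemma merge_level_apart:
  assumes "x \<in> merge_level c" "y \<in> merge_level c" "mdist X x y \<le> r" "\<theta> \<le> old_part c x"
  shows "\<not> \<theta> \<le> new_part c y"
proof
  assume new: "\<theta> \<le> new_part c y"
  have xy: "x \<in> mspace X" "y \<in> mspace X" using assms(1,2) by (auto simp: merge_level_def)
  have "\<not> 0 < old_part c y" using new_part_zero_if_old_part_pos[OF xy(2)] new \<theta>_pos by force
  then have "old_part c y = 0" using old_part_nonneg[OF xy(2), of c] by simp
  then show False
    using osc_leD[OF old_part_osc[of c] xy assms(3)] assms(4) osc_small by simp
qed

lemma merge_components: "components_diam_le X r (merge_level c) (2 * (El + r + \<rho>/3 + Ef))"
  unfolding components_diam_le_def
proof (intro ballI impI)
  fix x y assume x: "x \<in> merge_level c" and chain: "r_chain X r (merge_level c) x y"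
  have S: "merge_level c \<subseteq> mspace X" by (auto simp: merge_level_def)
  have xX: "x \<in> mspace X" "\<tau> + 2*\<delta> \<le> max (W x) (h x)" using x by (auto simp: merge_level_def)
  have in_level: "z \<in> merge_level c" if "r_chain X r (merge_level c) x' z" for x' z
    using r_chain_mem(2)[OF that] .
  from merge_level_split[OF x]
  show "mdist X x y \<le> 2 * (El + r + \<rho>/3 + Ef)"
  proof
    assume old: "\<theta> \<le> old_part c x"
    have "\<theta> \<le> old_part c z" if "r_chain X r (merge_level c) x z" for z
      using that
    proof (induction rule: r_chain_induct)
      case (step u z)
      then show ?case
        using merge_level_split merge_level_apart[OF in_level[OF step(1)]] by blast
    qed (fact old)
    then have "r_chain X r (old_level c) x y"
      using r_chain_transfer[OF chain] old_part_imp S in_level by blast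
    then have "mdist X x y \<le> El" by (rule components_diam_leD[OF old_level_components])
    then show ?thesis using El_nonneg Ef_nonneg r_pos \<rho>_large by (simp add: algebra_simps)
  next
    assume new: "\<theta> \<le> new_part c x"
    have inv: "\<theta> \<le> new_part c z \<and> tile z = tile x" if "r_chain X r (merge_level c) x z" for z
      using that
    proof (induction rule: r_chain_induct)
      case (step u z)
      have u: "u \<in> merge_level c" by (rule in_level[OF step(1)])
      have znew: "\<theta> \<le> new_part c z"
        using merge_level_split[OF step(2)] merge_level_apart[OF step(2) u] step(3,4)
        by (auto simp: mdist_commute)
      have "0 < h u" "0 < h z"
        using new_part_imp(2) u step(2,4) znew by (auto simp: merge_level_def)
      then have "tile z = tile u"
        using tile_eq u step(2,3) by (metis (no_types, lifting) mem_Collect_eq merge_level_def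
            mdist_commute)
      then show ?case using znew step(4) by simp
    qed (simp add: new)
    have hx: "0 < h x" by (rule new_part_imp(2)[OF xX new])
    show ?thesis
    proof (rule r_chain_dist_le_near_union[OF chain S old_level_subset old_level_components])
      show "piece (tile x) (c - 1) \<subseteq> mspace X"
        and "components_diam_le X \<rho> (piece (tile x) (c - 1)) Ef"
        using piece_props[OF xX(1) hx] by auto
      show "z \<in> old_level (c - 1) \<or> (\<exists>p\<in>piece (tile x) (c - 1). mdist X z p < \<rho>/3)"
        if "r_chain X r (merge_level c) x z" for z
        using new_part_imp(3)[of z c] inv[OF that] in_level[OF that] by (simp add: merge_level_def)
    qed (use El_nonneg Ef_nonneg r_pos \<rho>_large in auto)
  qed
qed

end

section \<open>The construction\<close>

definition affine_nonneg :: "(real \<Rightarrow> real) \<Rightarrow> bool" where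
  "affine_nonneg F \<longleftrightarrow> (\<exists>p q. 0 \<le> p \<and> 0 \<le> q \<and> (\<forall>r. F r = p * r + q))"

lemma affine_nonneg_const: "0 \<le> q \<Longrightarrow> affine_nonneg (\<lambda>r. q)"
  unfolding affine_nonneg_def by (intro exI[of _ 0] exI[of _ q]) simp

lemma affine_nonneg_id: "affine_nonneg (\<lambda>r. r)"
  unfolding affine_nonneg_def by (intro exI[of _ 1] exI[of _ 0]) simp

lemma affine_nonneg_add:
  assumes "affine_nonneg F" "affine_nonneg H" shows "affine_nonneg (\<lambda>r. F r + H r)"
proof -
  obtain p q p' q' where "0 \<le> p" "0 \<le> q" "\<And>r. F r = p * r + q"
    and "0 \<le> p'" "0 \<le> q'" "\<And>r. H r = p' * r + q'"
    using assms unfolding affine_nonneg_def by blast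
  then show ?thesis unfolding affine_nonneg_def
    by (intro exI[of _ "p + p'"] exI[of _ "q + q'"]) (simp add: algebra_simps)
qed

lemma affine_nonneg_mult:
  assumes "0 \<le> c" "affine_nonneg F" shows "affine_nonneg (\<lambda>r. c * F r)"
proof -
  obtain p q where "0 \<le> p" "0 \<le> q" "\<And>r. F r = p * r + q"
    using assms(2) unfolding affine_nonneg_def by blast
  then show ?thesis unfolding affine_nonneg_def using assms(1)
    by (intro exI[of _ "c * p"] exI[of _ "c * q"]) (simp add: algebra_simps)
qed

lemma affine_nonneg_divide: "0 < c \<Longrightarrow> affine_nonneg F \<Longrightarrow> affine_nonneg (\<lambda>r. F r / c)"
  using affine_nonneg_mult[of "1 / c" F] by simp

lemmas affine_nonneg_intros =
  affine_nonneg_const affine_nonneg_id affine_nonneg_add affine_nonneg_mult affine_nonneg_divide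

locale hurewicz_setting =
  fixes X :: "'a metric" and Y :: "'b metric" and f :: "'a \<Rightarrow> 'b"
    and aL bL cY bY aF bF cF :: real and m n :: nat
  assumes f_maps: "f ` mspace X \<subseteq> mspace Y"
    and aL_nonneg: "0 \<le> aL" and bL_nonneg: "0 \<le> bL"
    and f_lipschitz: "\<And>x y. x \<in> mspace X \<Longrightarrow> y \<in> mspace X \<Longrightarrow> mdist Y (f x) (f y) \<le> aL * mdist X x y + bL"
    and cY_nonneg: "0 \<le> cY" and bY_nonneg: "0 \<le> bY"
    and Y_control: "control_fun Y n (\<lambda>R. cY * R + bY)"
    and aF_nonneg: "0 \<le> aF" and bF_nonneg: "0 \<le> bF" and cF_nonneg: "0 \<le> cF"
    and f_control: "fun_control_fun X Y f m (\<lambda>r R. aF * r + bF * R + cF)"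
begin

definition \<theta> :: real where "\<theta> = 1 / (real (m + n) + 1)"

definition \<delta> :: real where "\<delta> = 1 / (2 * real n + 3)"

text \<open>The \<open>k\<close>-th partition oscillates by at most \<open>osc_bound k\<close> on \<open>r\<close>-close points; \<open>eps\<close> is
  chosen so that this stays below \<open>\<theta>/2\<close> up to \<open>k = n\<close>.\<close>

definition eps :: real where "eps = \<theta> * \<delta> / (20 * 2 ^ n)"

definition osc_bound :: "nat \<Rightarrow> real" where "osc_bound k = (2 ^ k - 1) * (5 * eps / \<delta>)"

lemma \<theta>_pos: "0 < \<theta>" and \<delta>_pos: "0 < \<delta>" and eps_pos: "0 < eps"
  by (simp_all add: \<theta>_def \<delta>_def eps_def)

lemma eps_less_\<delta>: "eps < \<delta>"
proof -
  have "\<theta> \<le> 1" "(1::real) \<le> 2 ^ n" by (simp_all add: \<theta>_def)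
  then have "\<theta> < 20 * 2 ^ n" by linarith
  then have "\<theta> / (20 * 2 ^ n) < 1" by (simp add: divide_less_eq)
  then show ?thesis using \<delta>_pos by (simp add: eps_def field_simps)
qed

lemma osc_bound_nonneg: "0 \<le> osc_bound k"
  using eps_pos \<delta>_pos by (simp add: osc_bound_def)

lemma osc_bound_Suc: "4 * eps / \<delta> + 2 * osc_bound k + eps \<le> osc_bound (Suc k)"
proof -
  have "eps \<le> eps / \<delta>"
    using eps_pos \<delta>_pos by (simp add: \<delta>_def field_simps)
  then show ?thesis using \<delta>_pos by (simp add: osc_bound_def field_simps)
qed

lemma osc_small: "k \<le> n \<Longrightarrow> 2 * (eps / \<delta> + osc_bound k) < \<theta>"
proof -
  assume "k \<le> n"
  then have "(2::real) ^ k \<le> 2 ^ n" by (simp add: power_increasing)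
  then have "2 * (eps / \<delta> + osc_bound k) \<le> (eps / \<delta>) * (10 * 2 ^ n - 8)"
    using eps_pos \<delta>_pos by (simp add: osc_bound_def field_simps)
  also have "\<dots> = \<theta> * ((10 * 2 ^ n - 8) / (20 * 2 ^ n))"
    using \<delta>_pos by (simp add: eps_def)
  also have "\<dots> < \<theta> * 1"
  proof (intro mult_strict_left_mono \<theta>_pos)
    have pos: "(0::real) < 2 ^ n" by simp
    show "(10 * 2 ^ n - 8) / (20 * 2 ^ n) < (1::real)"
      by (simp add: divide_less_eq) (use pos in linarith)
  qed
  finally show ?thesis by simp
qed

text \<open>Scale at which the families of \<open>Y\<close> are chosen; the images of \<open>r\<close>-close points are then
  \<open>eps * R/3\<close>-close.\<close>

definition scaleY :: "real \<Rightarrow> real" where "scaleY r = 3 * (aL * r + bL) / eps + r"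

definition nbhd_diam :: "real \<Rightarrow> real" where
  "nbhd_diam r = cY * scaleY r + bY + 2 * scaleY r / 3"

definition coarse_scale :: "real \<Rightarrow> real \<Rightarrow> real" where
  "coarse_scale e r = 3 * r / eps + 3 * e + 6 * r"

definition piece_diam :: "real \<Rightarrow> real \<Rightarrow> real" where
  "piece_diam e r = aF * coarse_scale e r + bF * nbhd_diam r + cF"

fun diam_bound :: "nat \<Rightarrow> real \<Rightarrow> real" where
  "diam_bound 0 r = 0"
| "diam_bound (Suc k) r = 2 * (diam_bound k r + r + coarse_scale (diam_bound k r) r / 3
     + piece_diam (diam_bound k r) r)"

lemma scaleY_pos: "0 < r \<Longrightarrow> 0 < scaleY r"
proof -
  assume "0 < r"
  moreover have "0 \<le> 3 * (aL * r + bL) / eps"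
    using \<open>0 < r\<close> aL_nonneg bL_nonneg eps_pos by simp
  ultimately show ?thesis by (simp add: scaleY_def)
qed

lemma nbhd_diam_pos: "0 < r \<Longrightarrow> 0 < nbhd_diam r"
  using scaleY_pos[of r] cY_nonneg bY_nonneg by (simp add: nbhd_diam_def add_nonneg_pos)

lemma diam_bound_nonneg: "0 < r \<Longrightarrow> 0 \<le> diam_bound k r"
  using nbhd_diam_pos[of r] eps_pos aF_nonneg bF_nonneg cF_nonneg
  by (induction k) (simp_all add: coarse_scale_def piece_diam_def)

lemma diam_bound_affine: "affine_nonneg (diam_bound k)"
proof (induction k)
  case 0
  then show ?case by (simp add: affine_nonneg_const)
next
  case (Suc k)
  have "affine_nonneg scaleY"
    unfolding scaleY_def[abs_def] using eps_pos aL_nonneg bL_nonneg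
    by (intro affine_nonneg_intros) simp_all
  then have "affine_nonneg nbhd_diam"
    unfolding nbhd_diam_def[abs_def] using cY_nonneg bY_nonneg
    by (intro affine_nonneg_intros) simp_all
  then show ?case
    unfolding diam_bound.simps coarse_scale_def piece_diam_def
    using Suc eps_pos aF_nonneg bF_nonneg cF_nonneg
    by (intro affine_nonneg_intros) simp_all
qed

end

locale hurewicz_scale = hurewicz_setting +
  fixes r :: real
  assumes r_pos: "0 < r"
begin

abbreviation R :: real where "R \<equiv> scaleY r"

definition cover_Y :: "nat \<Rightarrow> 'b set set" where
  "cover_Y = (SOME U. (\<forall>i\<le>n. r_disjoint Y R (U i)
      \<and> (\<forall>A\<in>U i. A \<subseteq> mspace Y \<and> diam_le Y A (cY * R + bY))) \<and> mspace Y \<subseteq> (\<Union>i\<le>n. \<Union>(U i)))"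

lemma f_in: "x \<in> mspace X \<Longrightarrow> f x \<in> mspace Y"
  using f_maps by blast

lemma R_pos: "0 < R"
  by (rule scaleY_pos[OF r_pos])

lemma cover_Y:
  shows "k \<le> n \<Longrightarrow> r_disjoint Y R (cover_Y k)"
    and "k \<le> n \<Longrightarrow> A \<in> cover_Y k \<Longrightarrow> A \<subseteq> mspace Y \<and> diam_le Y A (cY * R + bY)"
    and "mspace Y \<subseteq> (\<Union>i\<le>n. \<Union>(cover_Y i))"
proof -
  have "\<exists>U. (\<forall>i\<le>n. r_disjoint Y R (U i) \<and> (\<forall>A\<in>U i. A \<subseteq> mspace Y \<and> diam_le Y A (cY * R + bY)))
      \<and> mspace Y \<subseteq> (\<Union>i\<le>n. \<Union>(U i))"
    using Y_control R_pos unfolding control_fun_def by blast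
  from someI_ex[OF this] show "k \<le> n \<Longrightarrow> r_disjoint Y R (cover_Y k)"
    and "k \<le> n \<Longrightarrow> A \<in> cover_Y k \<Longrightarrow> A \<subseteq> mspace Y \<and> diam_le Y A (cY * R + bY)"
    and "mspace Y \<subseteq> (\<Union>i\<le>n. \<Union>(cover_Y i))"
    unfolding cover_Y_def by blast+
qed

lemma f_close:
  assumes "x \<in> mspace X" "y \<in> mspace X" "mdist X x y \<le> r"
  shows "mdist Y (f x) (f y) \<le> eps * (R/3)" "mdist Y (f x) (f y) < R/3"
proof -
  have "mdist Y (f x) (f y) \<le> aL * r + bL"
    using f_lipschitz[OF assms(1,2)] mult_left_mono[OF assms(3) aL_nonneg] by linarith
  also have "\<dots> \<le> eps * (R/3)"
    using eps_pos r_pos by (simp add: scaleY_def field_simps)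
  finally show "mdist Y (f x) (f y) \<le> eps * (R/3)" .
  moreover have "\<delta> \<le> 1" by (simp add: \<delta>_def)
  then have "eps < 1" using eps_less_\<delta> by linarith
  then have "eps * (R/3) < R/3" using R_pos by simp
  ultimately show "mdist Y (f x) (f y) < R/3" by linarith
qed

definition height :: "nat \<Rightarrow> 'a \<Rightarrow> real" where
  "height k x = bump Y (R/3) (\<Union>(cover_Y k)) (f x)"

lemma height_bounds: "0 \<le> height k x" "height k x \<le> 1"
  using R_pos by (simp_all add: height_def bump_ge_0 bump_le_1)

lemma height_osc: "k \<le> n \<Longrightarrow> osc_le X r (height k) eps"
proof (rule osc_leI)
  fix x y assume k: "k \<le> n" and xy: "x \<in> mspace X" "y \<in> mspace X" "mdist X x y \<le> r"
  have "\<bar>height k x - height k y\<bar> \<le> mdist Y (f x) (f y) / (R/3)"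
    unfolding height_def using R_pos cover_Y(2)[OF k] f_in[OF xy(1)] f_in[OF xy(2)]
    by (intro bump_lipschitz) auto
  also have "\<dots> \<le> eps" using f_close(1)[OF xy] R_pos by (simp add: divide_le_eq)
  finally show "\<bar>height k x - height k y\<bar> \<le> eps" .
qed

fun max_height :: "nat \<Rightarrow> 'a \<Rightarrow> real" where
  "max_height 0 x = 0"
| "max_height (Suc k) x = max (max_height k x) (height k x)"

lemma max_height_osc: "k \<le> Suc n \<Longrightarrow> osc_le X r (max_height k) eps"
proof (induction k)
  case 0
  then show ?case using eps_pos by (simp add: osc_le_def)
next
  case (Suc k)
  then have "osc_le X r (\<lambda>x. max (max_height k x) (height k x)) (max eps eps)"
    by (intro osc_le_max height_osc) simp_all
  then show ?case by simp
qed

lemma max_height_top: "x \<in> mspace X \<Longrightarrow> max_height (Suc n) x = 1"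
proof -
  assume x: "x \<in> mspace X"
  have le: "height i x \<le> max_height k x" if "i < k" for i k
    using that
  proof (induction k)
    case (Suc k)
    then show ?case by (cases "i = k") (auto simp: le_max_iff_disj)
  qed simp
  have upper: "max_height k x \<le> 1" for k
    using height_bounds(2) by (induction k) auto
  have fx: "f x \<in> mspace Y" using f_in[OF x] .
  then obtain i where i: "i \<le> n" "f x \<in> \<Union>(cover_Y i)" using cover_Y(3) by blast
  have "0 < R/3" using R_pos by simp
  then have "height i x = 1" unfolding height_def using i(2) fx by (rule bump_eq_1)
  then have "1 \<le> max_height (Suc n) x" using le[of i "Suc n"] i(1) by simp
  with upper show ?thesis by (rule order_antisym)
qed

definition tile :: "nat \<Rightarrow> 'a \<Rightarrow> 'b set" where
  "tile k x = (SOME U. U \<in> cover_Y k \<and> (\<exists>u\<in>U. mdist Y (f x) u < R/3))"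

lemma tile: "0 < height k x \<Longrightarrow> tile k x \<in> cover_Y k \<and> (\<exists>u\<in>tile k x. mdist Y (f x) u < R/3)"
proof -
  assume "0 < height k x"
  moreover have "0 < R/3" using R_pos by simp
  ultimately obtain p where "p \<in> \<Union>(cover_Y k)" "mdist Y (f x) p < R/3"
    using bump_pos_imp[of "R/3" Y "\<Union>(cover_Y k)" "f x"] unfolding height_def by blast
  then have "\<exists>U. U \<in> cover_Y k \<and> (\<exists>u\<in>U. mdist Y (f x) u < R/3)" by blast
  then show ?thesis unfolding tile_def by (rule someI_ex)
qed

text \<open>Tiles are \<open>R\<close>-apart while \<open>r\<close>-close points have \<open>R/3\<close>-close images.\<close>

lemma tile_eq:
  assumes k: "k \<le> n" and xy: "x \<in> mspace X" "y \<in> mspace X" "mdist X x y \<le> r"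
    and h: "0 < height k x" "0 < height k y"
  shows "tile k x = tile k y"
proof (rule ccontr)
  assume ne: "tile k x \<noteq> tile k y"
  obtain u1 u2 where u: "u1 \<in> tile k x" "mdist Y (f x) u1 < R/3" "u2 \<in> tile k y" "mdist Y (f y) u2 < R/3"
    using tile[OF h(1)] tile[OF h(2)] by blast
  have tiles: "tile k x \<in> cover_Y k" "tile k y \<in> cover_Y k" using tile h by blast+
  have "u1 \<in> mspace Y" "u2 \<in> mspace Y"
    using cover_Y(2)[OF k tiles(1)] cover_Y(2)[OF k tiles(2)] u(1,3) by blast+
  then have "mdist Y u1 u2 \<le> mdist Y u1 (f x) + mdist Y (f x) (f y) + mdist Y (f y) u2"
    by (intro mdist_triangle3 f_in xy(1,2))
  moreover have "R \<le> mdist Y u1 u2"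
    using cover_Y(1)[OF k] tiles ne u(1,3) unfolding r_disjoint_def by blast
  ultimately show False using u(2,4) f_close(2)[OF xy] by (simp add: mdist_commute)
qed

definition nbhd_preimage :: "'b set \<Rightarrow> 'a set" where
  "nbhd_preimage U = {x \<in> mspace X. \<exists>u\<in>U. mdist Y (f x) u < R/3}"

lemma nbhd_preimage_diam:
  assumes "k \<le> n" "U \<in> cover_Y k" shows "diam_le Y (f ` nbhd_preimage U) (nbhd_diam r)"
  unfolding diam_le_def
proof (intro ballI)
  fix y1 y2 assume "y1 \<in> f ` nbhd_preimage U" "y2 \<in> f ` nbhd_preimage U"
  then obtain x1 x2 u1 u2 where x: "x1 \<in> mspace X" "x2 \<in> mspace X" "y1 = f x1" "y2 = f x2"
    and u: "u1 \<in> U" "mdist Y (f x1) u1 < R/3" "u2 \<in> U" "mdist Y (f x2) u2 < R/3"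
    unfolding nbhd_preimage_def by blast
  have "mdist Y (f x1) (f x2) \<le> mdist Y (f x1) u1 + mdist Y u1 u2 + mdist Y u2 (f x2)"
    using cover_Y(2)[OF assms] u(1,3) by (intro mdist_triangle3 f_in x(1,2)) auto
  moreover have "mdist Y u1 u2 \<le> cY * R + bY"
    using cover_Y(2)[OF assms] u(1,3) unfolding diam_le_def by blast
  ultimately show "mdist Y y1 y2 \<le> nbhd_diam r"
    using u(2,4) x(3,4) by (simp add: nbhd_diam_def mdist_commute)
qed

definition \<rho> :: "nat \<Rightarrow> real" where "\<rho> k = coarse_scale (diam_bound k r) r"

lemma \<rho>_large: "diam_bound k r + 2 * r \<le> \<rho> k / 3" and \<rho>_osc: "3 * r / \<rho> k \<le> eps"
  and \<rho>_pos: "0 < \<rho> k"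
proof -
  have e: "0 \<le> diam_bound k r" "0 < r / eps" using diam_bound_nonneg r_pos eps_pos by auto
  then show "diam_bound k r + 2 * r \<le> \<rho> k / 3" by (simp add: \<rho>_def coarse_scale_def)
  have "3 * r / eps \<le> \<rho> k" using e r_pos by (simp add: \<rho>_def coarse_scale_def)
  moreover have "0 < 3 * r / eps" using e by simp
  ultimately show "0 < \<rho> k" by linarith
  then show "3 * r / \<rho> k \<le> eps"
    using \<open>3 * r / eps \<le> \<rho> k\<close> eps_pos by (simp add: divide_le_eq mult.commute)
qed

definition pieces :: "nat \<Rightarrow> 'b set \<Rightarrow> nat \<Rightarrow> 'a set" where
  "pieces k U = (SOME B. nbhd_preimage U = (\<Union>i\<le>m. B i)
     \<and> (\<forall>i. B i \<subseteq> mspace X \<and> components_diam_le X (\<rho> k) (B i) (piece_diam (diam_bound k r) r)))"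

lemma pieces:
  assumes "k \<le> n" "U \<in> cover_Y k"
  shows "nbhd_preimage U = (\<Union>i\<le>m. pieces k U i)"
    and "pieces k U i \<subseteq> mspace X"
    and "components_diam_le X (\<rho> k) (pieces k U i) (piece_diam (diam_bound k r) r)"
proof -
  have "nbhd_preimage U \<subseteq> mspace X" by (auto simp: nbhd_preimage_def)
  from f_control[unfolded fun_control_fun_def, rule_format, OF \<rho>_pos nbhd_diam_pos[OF r_pos] this
      nbhd_preimage_diam[OF assms]]
  obtain B where B: "nbhd_preimage U = (\<Union>i\<le>m. B i)"
    "\<And>i. i \<le> m \<Longrightarrow> components_diam_le X (\<rho> k) (B i) (piece_diam (diam_bound k r) r)"
    unfolding piece_diam_def \<rho>_def[symmetric] by blast
  define B' where "B' i = (if i \<le> m then B i else {})" for i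
  have "nbhd_preimage U = (\<Union>i\<le>m. B' i)" using B(1) by (simp add: B'_def)
  moreover have "B' i \<subseteq> mspace X" for i
    using B(1) by (auto simp: B'_def nbhd_preimage_def)
  moreover have "components_diam_le X (\<rho> k) (B' i) (piece_diam (diam_bound k r) r)" for i
    using B(2) by (simp add: B'_def components_diam_le_def)
  ultimately have "\<exists>B. nbhd_preimage U = (\<Union>i\<le>m. B i)
     \<and> (\<forall>i. B i \<subseteq> mspace X \<and> components_diam_le X (\<rho> k) (B i) (piece_diam (diam_bound k r) r))"
    by blast
  from someI_ex[OF this] show "nbhd_preimage U = (\<Union>i\<le>m. pieces k U i)"
    and "pieces k U i \<subseteq> mspace X"
    and "components_diam_le X (\<rho> k) (pieces k U i) (piece_diam (diam_bound k r) r)"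
    unfolding pieces_def by blast+
qed

definition piece_stairs :: "nat \<Rightarrow> nat \<Rightarrow> 'a \<Rightarrow> real" where
  "piece_stairs k j x =
     (if 0 < height k x then bump_stair X (\<rho> k / 3) m (pieces k (tile k x)) j x else 1)"

lemma piece_stairs_partition: "cumulative_partition X m (piece_stairs k)"
proof -
  have s: "0 < \<rho> k / 3" using \<rho>_pos by simp
  note B = cumulative_partitionD[OF cumulative_partition_bump_stair[OF s]]
  show ?thesis
  proof (rule cumulative_partitionI)
    fix c x assume x: "x \<in> mspace X"
    show "0 \<le> piece_stairs k c x" "piece_stairs k c x \<le> piece_stairs k (Suc c) x"
      "m \<le> c \<Longrightarrow> piece_stairs k c x = 1"
      using B[OF x] by (simp_all add: piece_stairs_def)
  qed
qed

lemma piece_stairs_osc: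
  assumes k: "k \<le> n" and xy: "x \<in> mspace X" "y \<in> mspace X" "mdist X x y \<le> r"
    and h: "0 < height k x" "0 < height k y"
  shows "\<bar>piece_stairs k j x - piece_stairs k j y\<bar> \<le> eps"
proof -
  have s: "0 < \<rho> k / 3" using \<rho>_pos by simp
  have "\<bar>bump_stair X (\<rho> k / 3) m (pieces k (tile k y)) j x
      - bump_stair X (\<rho> k / 3) m (pieces k (tile k y)) j y\<bar> \<le> mdist X x y / (\<rho> k / 3)"
    using pieces(2)[OF k tile[THEN conjunct1, OF h(2)]] by (intro bump_stair_lipschitz[OF s _ xy(1,2)])
  then have "\<bar>piece_stairs k j x - piece_stairs k j y\<bar> \<le> mdist X x y / (\<rho> k / 3)"
    using h tile_eq[OF k xy h] by (simp add: piece_stairs_def)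
  also have "\<dots> \<le> r / (\<rho> k / 3)"
    using xy(3) s by (rule divide_right_mono[OF _ less_imp_le])
  also have "\<dots> = 3 * r / \<rho> k" by simp
  also have "\<dots> \<le> eps" by (rule \<rho>_osc)
  finally show ?thesis .
qed

lemma piece_stairs_near:
  assumes k: "k \<le> n" and x: "x \<in> mspace X" and h: "0 < height k x"
    and pos: "0 < increment (piece_stairs k) j x"
  shows "\<exists>p\<in>pieces k (tile k x) j. mdist X x p < \<rho> k / 3"
proof (rule bump_stair_increment_pos_imp)
  show "0 < \<rho> k / 3" using \<rho>_pos by simp
  show "x \<in> (\<Union>i\<le>m. pieces k (tile k x) i)"
    using tile[OF h] x pieces(1)[OF k] by (auto simp: nbhd_preimage_def)
  have "piece_stairs k i x = bump_stair X (\<rho> k / 3) m (pieces k (tile k x)) i x" for i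
    using h by (simp add: piece_stairs_def)
  then have "increment (piece_stairs k) j x = increment (bump_stair X (\<rho> k / 3) m (pieces k (tile k x))) j x"
    by (cases j) (simp_all add: increment_def)
  then show "0 < increment (bump_stair X (\<rho> k / 3) m (pieces k (tile k x))) j x"
    using pos by simp
qed (fact x)

fun stairs :: "nat \<Rightarrow> nat \<Rightarrow> 'a \<Rightarrow> real" where
  "stairs 0 = (\<lambda>c x. 1)"
| "stairs (Suc k) =
     merge_stage ((2 * real k + 1) * \<delta>) \<delta> (max_height k) (height k) (stairs k) (piece_stairs k)"

definition good_stairs :: "nat \<Rightarrow> bool" where
  "good_stairs k \<longleftrightarrow> cumulative_partition X (m + k) (stairs k)
     \<and> (\<forall>c. osc_le X r (stairs k c) (osc_bound k))
     \<and> (\<forall>c. components_diam_le X r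
          {x \<in> mspace X. (2 * real k + 1) * \<delta> \<le> max_height k x \<and> \<theta> \<le> increment (stairs k) c x}
          (diam_bound k r))
     \<and> (0 < k \<longrightarrow> (\<forall>x\<in>mspace X. stairs k 0 x = 0))"

lemma good_stairs_0: "good_stairs 0"
  unfolding good_stairs_def
proof (intro conjI allI)
  fix c
  have empty: "{x \<in> mspace X. (2 * real 0 + 1) * \<delta> \<le> max_height 0 x
      \<and> \<theta> \<le> increment (stairs 0) c x} = {}"
    using \<delta>_pos by auto
  show "components_diam_le X r
      {x \<in> mspace X. (2 * real 0 + 1) * \<delta> \<le> max_height 0 x \<and> \<theta> \<le> increment (stairs 0) c x}
      (diam_bound 0 r)"
    unfolding empty by (simp add: components_diam_le_def)
qed (simp_all add: cumulative_partition_def osc_le_def osc_bound_def)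

lemma good_stairs_Suc:
  assumes k: "k \<le> n" and good: "good_stairs k"
  shows "good_stairs (Suc k)"
proof -
  have L: "cumulative_partition X (m + k) (stairs k)" "\<And>c. osc_le X r (stairs k c) (osc_bound k)"
    "\<And>c. components_diam_le X r
        {x \<in> mspace X. (2 * real k + 1) * \<delta> \<le> max_height k x \<and> \<theta> \<le> increment (stairs k) c x}
        (diam_bound k r)"
    using good by (auto simp: good_stairs_def)
  have L_zero: "stairs k 0 x = 0" if "x \<in> mspace X" "(2 * real k + 1) * \<delta> < max_height k x" for x
    using good that \<delta>_pos by (cases k) (auto simp: good_stairs_def)
  have Ef: "0 \<le> piece_diam (diam_bound k r) r"
    using \<rho>_pos[of k] nbhd_diam_pos[OF r_pos] aF_nonneg bF_nonneg cF_nonneg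
    by (simp add: piece_diam_def \<rho>_def[symmetric])
  have piece_props: "\<And>x j. x \<in> mspace X \<Longrightarrow> 0 < height k x \<Longrightarrow> pieces k (tile k x) j \<subseteq> mspace X
      \<and> components_diam_le X (\<rho> k) (pieces k (tile k x) j) (piece_diam (diam_bound k r) r)"
    using pieces(2,3)[OF k] tile by blast
  have \<tau>: "0 \<le> (2 * real k + 1) * \<delta>" using \<delta>_pos by simp
  interpret stage: merge_setting X r \<theta> \<delta> "(2 * real k + 1) * \<delta>" "\<rho> k" "diam_bound k r"
    "piece_diam (diam_bound k r) r" "osc_bound k" eps eps m "m + k" "max_height k" "height k"
    "stairs k" "piece_stairs k" "tile k" "pieces k"
    by unfold_locales (fact r_pos \<theta>_pos \<delta>_pos \<tau> less_imp_le[OF eps_pos] Ef piece_props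
        diam_bound_nonneg[OF r_pos, of k] osc_bound_nonneg[of k] le_add1[of m k] L L_zero
        max_height_osc[OF le_SucI[OF k]] height_osc[OF k] piece_stairs_partition[of k]
        piece_stairs_osc[OF k] piece_stairs_near[OF k] tile_eq[OF k] eps_less_\<delta> osc_small[OF k]
        \<rho>_large[of k])+
  have level: "stage.merge_level c = {x \<in> mspace X. (2 * real (Suc k) + 1) * \<delta> \<le> max_height (Suc k) x
      \<and> \<theta> \<le> increment (stairs (Suc k)) c x}" for c
    unfolding stage.merge_level_def by (simp add: algebra_simps)
  have "osc_le X r (stairs (Suc k) c) (osc_bound (Suc k))" for c
    using stage.merge_osc osc_bound_Suc by (auto intro: osc_le_mono)
  moreover have "diam_bound (Suc k) r = 2 * (diam_bound k r + r + \<rho> k / 3 + piece_diam (diam_bound k r) r)"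
    by (simp add: \<rho>_def)
  ultimately show ?thesis
    using stage.merge_partition stage.merge_components level stage.merge_zero
    by (simp add: good_stairs_def)
qed

lemma good_stairs: "k \<le> Suc n \<Longrightarrow> good_stairs k"
  by (induction k) (simp_all add: good_stairs_0 good_stairs_Suc)

lemma control_families:
  "\<exists>U. (\<forall>i\<le>m + n. r_disjoint X r (U i)
      \<and> (\<forall>A\<in>U i. A \<subseteq> mspace X \<and> diam_le X A (diam_bound (Suc n) r)))
    \<and> mspace X \<subseteq> (\<Union>i\<le>m + n. \<Union>(U i))"
proof -
  define F where "F = stairs (Suc n)"
  define C where "C i = {x \<in> mspace X. \<theta> \<le> increment F (Suc i) x}" for i
  define U where "U i = (\<lambda>x. {y. r_chain X r (C i) x y}) ` C i" for i
  have F: "cumulative_partition X (m + Suc n) F" "\<And>x. x \<in> mspace X \<Longrightarrow> F 0 x = 0"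
    "\<And>c. components_diam_le X r {x \<in> mspace X. (2 * real (Suc n) + 1) * \<delta> \<le> max_height (Suc n) x
        \<and> \<theta> \<le> increment F c x} (diam_bound (Suc n) r)"
    using good_stairs[of "Suc n"] by (simp_all add: good_stairs_def F_def)
  have "(2 * real (Suc n) + 1) * \<delta> = 1" by (simp add: \<delta>_def field_simps)
  then have "{x \<in> mspace X. (2 * real (Suc n) + 1) * \<delta> \<le> max_height (Suc n) x
      \<and> \<theta> \<le> increment F (Suc i) x} = C i" for i
    using max_height_top by (auto simp: C_def)
  then have C: "components_diam_le X r (C i) (diam_bound (Suc n) r)" for i
    using F(3)[of "Suc i"] by simp
  have CX: "C i \<subseteq> mspace X" for i by (auto simp: C_def)
  note family = r_components_family[OF CX C, folded U_def]
  have colour: "\<exists>i\<le>m + n. x \<in> C i" if x: "x \<in> mspace X" for x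
  proof -
    obtain c where c: "c \<in> {1..m + Suc n}" "1 / real (m + Suc n) \<le> increment F c x"
      using cumulative_partition_increment_ge[OF F(1) x F(2)[OF x]] by auto
    then obtain i where i: "c = Suc i" "i \<le> m + n" by (cases c) auto
    have "\<theta> = 1 / real (m + Suc n)" by (simp add: \<theta>_def)
    then have "x \<in> C i" using c(2) x i(1) by (simp add: C_def)
    then show ?thesis using i(2) by blast
  qed
  have "mspace X \<subseteq> (\<Union>i\<le>m + n. \<Union>(U i))"
  proof
    fix x assume "x \<in> mspace X"
    then obtain i where i: "i \<le> m + n" "x \<in> C i" using colour by blast
    then have "x \<in> \<Union>(U i)" using family(3)[of i] by blast
    then show "x \<in> (\<Union>i\<le>m + n. \<Union>(U i))" using i(1) by blast
  qed
  moreover have "\<forall>i\<le>m + n. r_disjoint X r (U i)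
      \<and> (\<forall>A\<in>U i. A \<subseteq> mspace X \<and> diam_le X A (diam_bound (Suc n) r))"
    using family(1,2) by blast
  ultimately show ?thesis by blast
qed

end

lemma (in hurewicz_setting) control_fun_diam_bound: "control_fun X (m + n) (diam_bound (Suc n))"
  unfolding control_fun_def
proof (intro allI impI)
  fix r :: real assume "0 < r"
  then interpret hurewicz_scale X Y f aL bL cY bY aF bF cF m n r
    using hurewicz_setting_axioms by (simp add: hurewicz_scale_def hurewicz_scale_axioms_def)
  show "\<exists>U. (\<forall>i\<le>m + n. r_disjoint X r (U i)
      \<and> (\<forall>A\<in>U i. A \<subseteq> mspace X \<and> diam_le X A (diam_bound (Suc n) r)))
    \<and> mspace X \<subseteq> (\<Union>i\<le>m + n. \<Union>(U i))"
    by (rule control_families)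
qed

lemma (in hurewicz_setting) hurewicz_bound: "asdimAN_le X (m + n)"
proof -
  obtain p q where "0 \<le> p" "0 \<le> q" "\<And>r. diam_bound (Suc n) r = p * r + q"
    using diam_bound_affine[of "Suc n"] unfolding affine_nonneg_def by blast
  moreover have "control_fun X (m + n) (diam_bound (Suc n))" by (rule control_fun_diam_bound)
  moreover have "diam_bound (Suc n) = (\<lambda>r. p * r + q)" using calculation(3) by (rule ext)
  ultimately show ?thesis unfolding asdimAN_le_def by auto
qed

lemma asdimAN_le_add:
  assumes "asymp_lipschitz X Y f" "fun_asdimAN_le X Y f m" "asdimAN_le Y n"
  shows "asdimAN_le X (m + n)"
proof -
  obtain aL bL where "f ` mspace X \<subseteq> mspace Y" "0 \<le> aL" "0 \<le> bL"
    "\<And>x y. x \<in> mspace X \<Longrightarrow> y \<in> mspace X \<Longrightarrow> mdist Y (f x) (f y) \<le> aL * mdist X x y + bL"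
    using assms(1) unfolding asymp_lipschitz_def by blast
  moreover obtain aF bF cF where "0 \<le> aF" "0 \<le> bF" "0 \<le> cF"
    "fun_control_fun X Y f m (\<lambda>r R. aF * r + bF * R + cF)"
    using assms(2) unfolding fun_asdimAN_le_def by blast
  moreover obtain bY cY where "0 \<le> bY" "0 \<le> cY" "control_fun Y n (\<lambda>r. cY * r + bY)"
    using assms(3) unfolding asdimAN_le_def by blast
  ultimately interpret hurewicz_setting X Y f aL bL cY bY aF bF cF m n
    by unfold_locales
  show ?thesis by (rule hurewicz_bound)
qed

lemma Inf_enat_attained:
  "Inf {enat k | k. P k} \<noteq> \<infinity> \<Longrightarrow> \<exists>k. Inf {enat k | k. P k} = enat k \<and> P k"
proof -
  assume fin: "Inf {enat k | k. P k} \<noteq> \<infinity>"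
  then have "{enat k | k. P k} \<noteq> {}" by (auto simp: top_enat_def[symmetric])
  then have "Inf {enat k | k. P k} \<in> {enat k | k. P k}"
    unfolding Inf_enat_def by (auto intro: LeastI)
  then show ?thesis by auto
qed

theorem mainTheorem5:
  fixes X :: "'a metric" and Y :: "'b metric" and f :: "'a \<Rightarrow> 'b"
  assumes "asymp_lipschitz X Y f"
  shows "asdimAN X \<le> fun_asdimAN X Y f + asdimAN Y"
proof (cases "fun_asdimAN X Y f = \<infinity> \<or> asdimAN Y = \<infinity>")
  case True
  then show ?thesis by auto
next
  case False
  then obtain m n where m: "fun_asdimAN X Y f = enat m" "fun_asdimAN_le X Y f m"
    and n: "asdimAN Y = enat n" "asdimAN_le Y n"
    using Inf_enat_attained[of "fun_asdimAN_le X Y f"] Inf_enat_attained[of "asdimAN_le Y"]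
    unfolding fun_asdimAN_def asdimAN_def by blast
  have "asdimAN_le X (m + n)" by (rule asdimAN_le_add[OF assms m(2) n(2)])
  then have "asdimAN X \<le> enat (m + n)" unfolding asdimAN_def by (auto intro: Inf_lower)
  then show ?thesis using m(1) n(1) by simp
qed

end
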